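(* There is a constant $c>0$ such that for every integer $n\ge 1$, with $N=2^n$, the $2N\times 2N$ unitary matrix $C_N^{\mathrm I}\oplus i\,S_N^{\mathrm I}$ can be realized exactly by a quantum circuit on $n+1$ qubits (plus at most a constant number of ancilla qubits that start and end in $|0\rangle$) consisting of at most $c\,n^2=c\log_2^2 N$ elementary gates. In short, $C_N^{\mathrm I}$ and $S_N^{\mathrm I}$ can be realized with $O(\log^2 N)$ elementary quantum gates.
   Context: Qubit/basis conventions: the state space of $m$ qubits is $\mathbb{C}^{2^m}$ with computational basis $|x\rangle$, $x$ a bit string $b_m\dots b_1$ identified with the integer $\sum_k b_k2^{k-1}$; the most significant bit corresponds to the leftmost tensor factor. A matrix of size $2^m\times 2^m$ acts on this basis indexed by these integers. Elementary gates: (i) a CNOT between any two qubits (negate the target bit iff the control bit is 1), and (ii) any single-qubit gate, i.e. $I_{2^{m-t}}\otimes U\otimes I_{2^{t-1}}$ with $U\in\mathcal U(2)$ arbitrary, acting on qubit $t$. A circuit realizes a unitary $W$ if the product of its gates equals $W$ (on the ancillas, if any, it maps $|0\rangle$ to $|0\rangle$). Direct sum $A\oplus B$ means the block-diagonal matrix $\begin{pmatrix}A&0\\0&B\end{pmatrix}$. Discrete Cosine and Sine transforms of type I: with $k_0=k_N=1/\sqrt2$ and $k_j=1$ for $0<j<N$, $C_N^{\mathrm I}=\sqrt{2/N}\,[k_ik_j\cos(ij\pi/N)]_{i,j=0,\dots,N}$ (size $(N+1)\times(N+1)$) and $S_N^{\mathrm I}=\sqrt{2/N}\,[\sin(ij\pi/N)]_{i,j=1,\dots,N-1}$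 (size $(N-1)\times(N-1)$). Here $i$ in $i\,S_N^{\mathrm I}$ denotes $\sqrt{-1}$. *)

theory Defs
  imports Complex_Main "Jordan_Normal_Form.Matrix"
begin

(* Bit k (k \<ge> 1) of the basis index x: b_k, with x = \<Sum>k b_k 2^(k-1). *)
definition qbit :: "nat \<Rightarrow> nat \<Rightarrow> nat" where
  "qbit x k = (x div 2 ^ (k - 1)) mod 2"

definition unitary2 :: "complex mat \<Rightarrow> bool" where
  "unitary2 U \<longleftrightarrow> U \<in> carrier_mat 2 2 \<and>
     U * mat 2 2 (\<lambda>(i, j). cnj (U $$ (j, i))) = 1\<^sub>m 2"

(* I_{2^(m-t)} \<otimes> U \<otimes> I_{2^(t-1)} acting on qubit t of m qubits *)
definition single_qubit_gate :: "nat \<Rightarrow> nat \<Rightarrow> complex mat \<Rightarrow> complex mat" where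
  "single_qubit_gate m t U = mat (2 ^ m) (2 ^ m) (\<lambda>(x, y).
     if (\<forall>k. k \<ge> 1 \<and> k \<noteq> t \<longrightarrow> qbit x k = qbit y k)
     then U $$ (qbit x t, qbit y t) else 0)"

(* CNOT with control qubit c and target qubit t on m qubits: permutation matrix of
   the basis map y \<mapsto> (flip bit t of y iff bit c of y is 1) *)
definition cnot_gate :: "nat \<Rightarrow> nat \<Rightarrow> nat \<Rightarrow> complex mat" where
  "cnot_gate m c t = mat (2 ^ m) (2 ^ m) (\<lambda>(x, y).
     if x = (if qbit y c = 1 then
               (if qbit y t = 1 then y - 2 ^ (t - 1) else y + 2 ^ (t - 1))
             else y)
     then 1 else 0)"

definition elementary_gate :: "nat \<Rightarrow> complex mat \<Rightarrow> bool" where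
  "elementary_gate m G \<longleftrightarrow>
     (\<exists>c t. 1 \<le> c \<and> c \<le> m \<and> 1 \<le> t \<and> t \<le> m \<and> c \<noteq> t \<and> G = cnot_gate m c t) \<or>
     (\<exists>t U. 1 \<le> t \<and> t \<le> m \<and> unitary2 U \<and> G = single_qubit_gate m t U)"

(* product of the gates of a circuit (first gate of the list is the leftmost factor) *)
definition circuit_product :: "nat \<Rightarrow> complex mat list \<Rightarrow> complex mat" where
  "circuit_product d gs = foldr (*) gs (1\<^sub>m d)"

(* A circuit gs on m + a qubits realizes the 2^m x 2^m matrix W using a ancillas
   (the a most significant qubits): on inputs |0..0>|x> the product maps to |0..0>(W|x>). *)
definition realizes_with_ancillas :: "nat \<Rightarrow> nat \<Rightarrow> complex mat list \<Rightarrow> complex mat \<Rightarrow> bool" where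
  "realizes_with_ancillas m a gs W \<longleftrightarrow>
     (\<forall>g \<in> set gs. elementary_gate (m + a) g) \<and>
     (\<forall>x < 2 ^ m. \<forall>y < 2 ^ (m + a).
        circuit_product (2 ^ (m + a)) gs $$ (y, x) = (if y < 2 ^ m then W $$ (y, x) else 0))"

definition kfac :: "nat \<Rightarrow> nat \<Rightarrow> real" where
  "kfac N j = (if j = 0 \<or> j = N then 1 / sqrt 2 else 1)"

definition DCT1 :: "nat \<Rightarrow> complex mat" where
  "DCT1 N = mat (N + 1) (N + 1) (\<lambda>(i, j).
     complex_of_real (sqrt (2 / real N) * kfac N i * kfac N j * cos (real i * real j * pi / real N)))"

(* S_N^I, size (N-1) x (N-1); matrix entry (i,j) (0-based) is the paper's entry (i+1, j+1) *)
definition DST1 :: "nat \<Rightarrow> complex mat" where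
  "DST1 N = mat (N - 1) (N - 1) (\<lambda>(i, j).
     complex_of_real (sqrt (2 / real N) * sin (real (i + 1) * real (j + 1) * pi / real N)))"

definition direct_sum :: "complex mat \<Rightarrow> complex mat \<Rightarrow> complex mat" where
  "direct_sum A B = four_block_mat A (0\<^sub>m (dim_row A) (dim_col B)) (0\<^sub>m (dim_row B) (dim_col A)) B"

end

theory Submission
  imports Defs
begin

(*
  Write N = 2^n.  The matrix C_N^I (+) i S_N^I equals B^T F B, where F is the unitary DFT of
  size 2N and B is the real orthogonal "butterfly" whose column x is e_x for x in {0, N},
  (e_x + e_(2N-x)) / sqrt 2 for 0 < x < N and (e_(x-N) - e_(3N-x)) / sqrt 2 for N < x < 2N;
  this is because cosine and sine are even and odd under t |-> 2N - t.

  On n + 1 data qubits and one ancilla, B = P H.  Here H is a Hadamard on the top data qubit,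
  controlled by an ancilla that flags nonzero low bits (set and reset by adding 2^n -+ 1 to the
  low bits with the ancilla as carry), and P negates the low bits modulo 2^n when the top bit
  is set.  As H is symmetric and P an involutive permutation, the circuit H P F P H has matrix
  B^T F B.  Fourier transform and Draper's Fourier-space adders take O(n^2) gates each.
*)


lemma not_bit_if_less_exp: "(x::nat) < 2 ^ m \<Longrightarrow> m \<le> j \<Longrightarrow> \<not> bit x j"
  by (metis bit_take_bit_iff linorder_not_le take_bit_nat_eq_self_iff)

lemma less_exp_iff_no_high_bits: "(x::nat) < 2 ^ m \<longleftrightarrow> (\<forall>j\<ge>m. \<not> bit x j)"
proof
  assume "\<forall>j\<ge>m. \<not> bit x j"
  then have "take_bit m x = x"
    by (intro bit_eqI) (auto simp: bit_take_bit_iff not_le)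
  then show "x < 2 ^ m"
    by (metis take_bit_nat_less_exp)
qed (use not_bit_if_less_exp in blast)

definition bitval :: "nat \<Rightarrow> nat \<Rightarrow> nat" where
  "bitval x p = (if bit x p then 1 else 0)"

definition agree_off :: "nat set \<Rightarrow> nat \<Rightarrow> nat \<Rightarrow> bool" where
  "agree_off S x y \<longleftrightarrow> (\<forall>j. j \<notin> S \<longrightarrow> bit x j = bit y j)"

lemma bitval_less_2 [simp]: "bitval x p < 2"
  by (simp add: bitval_def)

lemma bitval_eq: "bit x q \<Longrightarrow> bitval x q = 1" "\<not> bit x q \<Longrightarrow> bitval x q = 0"
  by (auto simp: bitval_def)

lemma qbit_eq_bitval: "1 \<le> k \<Longrightarrow> qbit x k = bitval x (k - 1)"
  by (simp add: qbit_def bitval_def bit_iff_odd odd_iff_mod_2_eq_one)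

lemma set_bit_less_exp: "p < m \<Longrightarrow> (x::nat) < 2 ^ m \<Longrightarrow> set_bit p x < 2 ^ m"
  by (auto simp: less_exp_iff_no_high_bits bit_set_bit_iff)

lemma unset_bit_less_exp: "(x::nat) < 2 ^ m \<Longrightarrow> unset_bit p x < 2 ^ m"
  by (auto simp: less_exp_iff_no_high_bits bit_unset_bit_iff)

lemma flip_bit_less_exp: "p < m \<Longrightarrow> (x::nat) < 2 ^ m \<Longrightarrow> flip_bit p x < 2 ^ m"
  by (auto simp: less_exp_iff_no_high_bits bit_flip_bit_iff)

lemma flip_bit_eq_add: "\<not> bit (y::nat) t \<Longrightarrow> flip_bit t y = y + 2 ^ t"
  by (simp add: flip_bit_eq_if set_bit_eq)

lemma flip_bit_eq_diff: "bit (y::nat) t \<Longrightarrow> flip_bit t y = y - 2 ^ t"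
proof -
  assume y: "bit y t"
  have "\<not> bit (flip_bit t y) t"
    by (simp add: bit_flip_bit_iff y)
  moreover have "set_bit t (flip_bit t y) = y"
    by (rule bit_eqI) (auto simp: bit_set_bit_iff bit_flip_bit_iff y)
  ultimately show ?thesis
    by (metis add_diff_cancel_right' flip_bit_eq_add flip_bit_eq_if)
qed

lemma agree_off_sym: "agree_off S x y = agree_off S y x"
  by (auto simp: agree_off_def)

lemma agree_off_trans: "agree_off S x y \<Longrightarrow> agree_off S y z \<Longrightarrow> agree_off S x z"
  by (auto simp: agree_off_def)

lemma agree_off_refl [simp]: "agree_off S x x"
  by (auto simp: agree_off_def)

lemma agree_off_empty: "agree_off {} x y \<longleftrightarrow> x = y"
  by (auto simp: agree_off_def bit_eq_iff)

lemma agree_off_single_cases: "agree_off {p} z y \<Longrightarrow> z = unset_bit p y \<or> z = set_bit p y"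
proof (cases "bit z p")
  case True
  assume "agree_off {p} z y"
  then have "z = set_bit p y"
    using True by (intro bit_eqI) (auto simp: agree_off_def bit_set_bit_iff)
  then show ?thesis ..
next
  case False
  assume "agree_off {p} z y"
  then have "z = unset_bit p y"
    using False by (intro bit_eqI) (auto simp: agree_off_def bit_unset_bit_iff)
  then show ?thesis ..
qed

lemma agree_off_single_eqI: "agree_off {p} x y \<Longrightarrow> bitval x p = bitval y p \<Longrightarrow> x = y"
  by (rule bit_eqI) (auto simp: agree_off_def bitval_def split: if_splits)

lemma unset_bit_neq_set_bit: "unset_bit p (y::nat) \<noteq> set_bit p y"
  by (metis bit_set_bit_iff bit_unset_bit_iff possible_bit_nat)

lemma agree_off_unset_bit [simp]: "agree_off {p} (unset_bit p y) y"
  by (auto simp: agree_off_def bit_unset_bit_iff)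

lemma agree_off_set_bit [simp]: "agree_off {p} (set_bit p y) y"
  by (auto simp: agree_off_def bit_set_bit_iff)

lemma agree_off_set_bit_iff: "agree_off {t} (set_bit t x) y = agree_off {t} x y"
  by (auto simp: agree_off_def bit_set_bit_iff)

lemma agree_off_unset_bit_iff: "agree_off {t} (unset_bit t x) y = agree_off {t} x y"
  by (auto simp: agree_off_def bit_unset_bit_iff)

lemma bitval_unset_bit [simp]: "bitval (unset_bit p y) p = 0"
  by (simp add: bitval_def bit_unset_bit_iff)

lemma bitval_set_bit [simp]: "bitval (set_bit p y) p = 1"
  by (simp add: bitval_def bit_set_bit_iff)

lemma bit_mod_exp: "bit ((x::nat) mod 2 ^ n) j = (j < n \<and> bit x j)"
  by (simp flip: take_bit_eq_mod add: bit_take_bit_iff)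

lemma unset_bit_eq_mod: "(x::nat) < 2 ^ Suc n \<Longrightarrow> unset_bit n x = x mod 2 ^ n"
proof (rule bit_eqI)
  fix j
  assume "x < 2 ^ Suc n"
  then show "bit (unset_bit n x) j = bit (x mod 2 ^ n) j"
    using not_bit_if_less_exp[of x "Suc n" j]
    by (cases "j \<le> n") (auto simp: bit_unset_bit_iff bit_mod_exp)
qed

lemma set_bit_eq_add_mod: "(x::nat) < 2 ^ Suc n \<Longrightarrow> set_bit n x = 2 ^ n + x mod 2 ^ n"
proof -
  assume x: "x < 2 ^ Suc n"
  have "set_bit n x = set_bit n (x mod 2 ^ n)"
  proof (rule bit_eqI)
    fix j
    show "bit (set_bit n x) j = bit (set_bit n (x mod 2 ^ n)) j"
      using not_bit_if_less_exp[OF x, of j]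
      by (cases "j \<le> n") (auto simp: bit_set_bit_iff bit_mod_exp)
  qed
  then show ?thesis
    by (simp add: set_bit_eq bit_mod_exp)
qed

text \<open>A register is a list of bit positions of the basis index, least significant first.\<close>

fun reg_val :: "nat list \<Rightarrow> nat \<Rightarrow> nat" where
  "reg_val [] x = 0"
| "reg_val (q # qs) x = bitval x q + 2 * reg_val qs x"

fun set_reg :: "nat list \<Rightarrow> nat \<Rightarrow> nat \<Rightarrow> nat" where
  "set_reg [] v y = y"
| "set_reg (q # qs) v y = set_reg qs (v div 2) (if odd v then set_bit q y else unset_bit q y)"

lemma reg_val_snoc: "reg_val (qs @ [q]) x = reg_val qs x + 2 ^ length qs * bitval x q"
  by (induction qs) auto

lemma reg_val_less: "reg_val qs x < 2 ^ length qs"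
proof (induction qs)
  case (Cons q qs)
  moreover have "bitval x q \<le> 1"
    by (simp add: bitval_def)
  ultimately show ?case
    by simp
qed simp

lemma reg_val_cong: "(\<And>p. p \<in> set qs \<Longrightarrow> bit x p = bit y p) \<Longrightarrow> reg_val qs x = reg_val qs y"
  by (induction qs) (auto simp: bitval_def)

lemma reg_val_agree_off: "agree_off S x y \<Longrightarrow> set qs \<inter> S = {} \<Longrightarrow> reg_val qs x = reg_val qs y"
  by (rule reg_val_cong) (auto simp: agree_off_def)

lemma reg_val_set_bit_other: "q \<notin> set qs \<Longrightarrow> reg_val qs (set_bit q y) = reg_val qs y"
  by (rule reg_val_cong) (auto simp: bit_set_bit_iff)

lemma reg_val_unset_bit_other: "q \<notin> set qs \<Longrightarrow> reg_val qs (unset_bit q y) = reg_val qs y"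
  by (rule reg_val_cong) (auto simp: bit_unset_bit_iff)

lemma reg_val_eq_imp_bit_eq: "reg_val qs x = reg_val qs y \<Longrightarrow> p \<in> set qs \<Longrightarrow> bit x p = bit y p"
proof (induction qs)
  case (Cons q qs)
  then have sum: "bitval x q + 2 * reg_val qs x = bitval y q + 2 * reg_val qs y"
    by simp
  then have "bitval x q = bitval y q"
    by (auto simp: bitval_def) presburger+
  with sum have "bitval x q = bitval y q" "reg_val qs x = reg_val qs y"
    by auto
  then show ?case
    using Cons by (auto simp: bitval_def split: if_splits)
qed simp

lemma agree_off_reg_val_eqI: "agree_off (set qs) x y \<Longrightarrow> reg_val qs x = reg_val qs y \<Longrightarrow> x = y"
  by (rule bit_eqI) (metis agree_off_def reg_val_eq_imp_bit_eq)

lemma reg_val_map_Suc: "reg_val (map Suc ps) z = reg_val ps (z div 2)"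
  by (induction ps) (auto simp: bitval_def bit_Suc)

lemma reg_val_upt: "reg_val [0..<k] z = z mod 2 ^ k"
proof (induction k arbitrary: z)
  case (Suc k)
  have "[0..<Suc k] = 0 # map Suc [0..<k]"
    by (simp add: upt_conv_Cons map_Suc_upt)
  moreover have "bitval z 0 = z mod 2"
    by (simp add: bitval_def bit_0 odd_iff_mod_2_eq_one)
  ultimately have "reg_val [0..<Suc k] z = z mod 2 + 2 * ((z div 2) mod 2 ^ k)"
    using Suc by (simp add: reg_val_map_Suc)
  also have "\<dots> = z mod 2 ^ Suc k"
    by (simp add: mod_mult2_eq)
  finally show ?case .
qed simp

lemma reg_val_complement:
  "(\<And>p. p \<in> set ps \<Longrightarrow> bit z p = (\<not> bit y p)) \<Longrightarrow> reg_val ps z + reg_val ps y = 2 ^ length ps - 1"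
proof (induction ps)
  case (Cons p ps)
  then have "bitval z p + bitval y p = 1" "reg_val ps z + reg_val ps y = 2 ^ length ps - 1"
    by (auto simp: bitval_def)
  then have "reg_val (p # ps) z + reg_val (p # ps) y = 1 + 2 * (2 ^ length ps - 1)"
    by (simp add: algebra_simps)
  also have "\<dots> = 2 * 2 ^ length ps - 1"
    using one_le_power[of "2::nat" "length ps"] by linarith
  also have "\<dots> = 2 ^ length (p # ps) - 1"
    by simp
  finally show ?case .
qed simp

lemma split_top_bit: "(z::nat) < 2 ^ Suc n \<Longrightarrow> z = z mod 2 ^ n + 2 ^ n * bitval z n"
proof -
  assume "z < 2 ^ Suc n"
  then have "reg_val [0..<Suc n] z = z"
    by (simp only: reg_val_upt) simp
  moreover have "reg_val [0..<Suc n] z = z mod 2 ^ n + 2 ^ n * bitval z n"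
    by (simp only: upt_Suc_append[OF le0] reg_val_snoc reg_val_upt length_upt) simp
  ultimately show ?thesis
    by simp
qed

lemma less_half_iff_not_bit: "(x::nat) < 2 ^ Suc n \<Longrightarrow> x < 2 ^ n \<longleftrightarrow> \<not> bit x n"
proof
  assume "x < 2 ^ Suc n" "\<not> bit x n"
  then show "x < 2 ^ n"
    using split_top_bit[of x n] mod_less_divisor[of "2 ^ n" x] by (simp add: bitval_def)
qed (use not_bit_if_less_exp in blast)

lemma bit_set_reg_outside: "j \<notin> set qs \<Longrightarrow> bit (set_reg qs v y) j = bit y j"
  by (induction qs arbitrary: v y) (auto simp: bit_set_bit_iff bit_unset_bit_iff)

lemma set_reg_less_exp: "\<forall>p\<in>set qs. p < m \<Longrightarrow> y < 2 ^ m \<Longrightarrow> set_reg qs v y < 2 ^ m"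
  unfolding less_exp_iff_no_high_bits using bit_set_reg_outside by (metis not_le)

lemma agree_off_set_reg: "agree_off (set qs) (set_reg qs v y) y"
  by (simp add: agree_off_def bit_set_reg_outside)

lemma reg_val_set_reg: "distinct qs \<Longrightarrow> reg_val qs (set_reg qs v y) = v mod 2 ^ length qs"
proof (induction qs arbitrary: v y)
  case (Cons q qs)
  let ?y = "if odd v then set_bit q y else unset_bit q y"
  have "bitval (set_reg qs (v div 2) ?y) q = v mod 2"
    using Cons.prems
    by (auto simp: bitval_def bit_set_reg_outside bit_set_bit_iff bit_unset_bit_iff odd_iff_mod_2_eq_one)
  then have "reg_val (q # qs) (set_reg (q # qs) v y) = v mod 2 + 2 * ((v div 2) mod 2 ^ length qs)"
    using Cons by simp
  also have "\<dots> = v mod 2 ^ length (q # qs)"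
    by (simp add: mod_mult2_eq)
  finally show ?case .
qed simp


lemma sum_lessThan_single:
  fixes a d :: nat
  assumes "a < d" "\<And>z. z < d \<Longrightarrow> z \<noteq> a \<Longrightarrow> g z = 0"
  shows "(\<Sum>z<d. g z) = g a"
proof -
  have "(\<Sum>z<d. g z) = sum g {a}"
    using assms by (intro sum.mono_neutral_right) auto
  then show ?thesis
    by simp
qed

lemma sum_lessThan_two:
  fixes a b d :: nat
  assumes "a < d" "b < d" "a \<noteq> b" "\<And>z. z < d \<Longrightarrow> z \<noteq> a \<Longrightarrow> z \<noteq> b \<Longrightarrow> g z = 0"
  shows "(\<Sum>z<d. g z) = g a + g b"
proof -
  have "(\<Sum>z<d. g z) = sum g {a, b}"
    using assms by (intro sum.mono_neutral_right) auto
  then show ?thesis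
    using assms(3) by simp
qed

lemma index_mult_square:
  "A \<in> carrier_mat d d \<Longrightarrow> B \<in> carrier_mat d d \<Longrightarrow> i < d \<Longrightarrow> j < d \<Longrightarrow>
   (A * B) $$ (i, j) = (\<Sum>k<d. A $$ (i, k) * B $$ (k, j))"
  by (auto simp: index_mult_mat scalar_prod_def lessThan_atLeast0 intro!: sum.cong)

lemma index_mult_two_supported_column:
  assumes "A \<in> carrier_mat d d" "V \<in> carrier_mat d d" "z < d" "x < d" "a < d" "b < d" "a \<noteq> b"
    and "\<And>w. w < d \<Longrightarrow> w \<noteq> a \<Longrightarrow> w \<noteq> b \<Longrightarrow> V $$ (w, x) = 0"
  shows "(A * V) $$ (z, x) = A $$ (z, a) * V $$ (a, x) + A $$ (z, b) * V $$ (b, x)"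
proof -
  have "(A * V) $$ (z, x) = (\<Sum>w<d. A $$ (z, w) * V $$ (w, x))"
    using assms by (intro index_mult_square) auto
  also have "\<dots> = A $$ (z, a) * V $$ (a, x) + A $$ (z, b) * V $$ (b, x)"
    using assms by (intro sum_lessThan_two) auto
  finally show ?thesis .
qed

lemma index_mult_two_supported_row:
  assumes "U \<in> carrier_mat d d" "A \<in> carrier_mat d d" "y < d" "x < d" "a < d" "b < d" "a \<noteq> b"
    and "\<And>w. w < d \<Longrightarrow> w \<noteq> a \<Longrightarrow> w \<noteq> b \<Longrightarrow> U $$ (y, w) = 0"
  shows "(U * A) $$ (y, x) = U $$ (y, a) * A $$ (a, x) + U $$ (y, b) * A $$ (b, x)"
proof -
  have "(U * A) $$ (y, x) = (\<Sum>w<d. U $$ (y, w) * A $$ (w, x))"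
    using assms by (intro index_mult_square) auto
  also have "\<dots> = U $$ (y, a) * A $$ (a, x) + U $$ (y, b) * A $$ (b, x)"
    using assms by (intro sum_lessThan_two) auto
  finally show ?thesis .
qed

lemma mult_carrier_square [simp]:
  "A \<in> carrier_mat d d \<Longrightarrow> B \<in> carrier_mat d d \<Longrightarrow> A * B \<in> carrier_mat d d"
  by (rule mult_carrier_mat)

lemma square_mat_eqI:
  "A \<in> carrier_mat d d \<Longrightarrow> B \<in> carrier_mat d d \<Longrightarrow>
   (\<And>i j. i < d \<Longrightarrow> j < d \<Longrightarrow> A $$ (i, j) = B $$ (i, j)) \<Longrightarrow> A = B"
  by (rule eq_matI) auto

definition diag_op :: "nat \<Rightarrow> (nat \<Rightarrow> complex) \<Rightarrow> complex mat" where
  "diag_op m f = mat (2 ^ m) (2 ^ m) (\<lambda>(x, y). if x = y then f x else 0)"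

lemma diag_op_carrier [simp]: "diag_op m f \<in> carrier_mat (2 ^ m) (2 ^ m)"
  by (simp add: diag_op_def)

lemma index_diag_op: "x < 2 ^ m \<Longrightarrow> y < 2 ^ m \<Longrightarrow> diag_op m f $$ (x, y) = (if x = y then f x else 0)"
  by (simp add: diag_op_def)

lemma index_mult_diag_op:
  assumes "B \<in> carrier_mat (2 ^ m) (2 ^ m)" "x < 2 ^ m" "y < 2 ^ m"
  shows "(B * diag_op m f) $$ (x, y) = B $$ (x, y) * f y"
proof -
  have "(B * diag_op m f) $$ (x, y) = (\<Sum>k<2 ^ m. B $$ (x, k) * diag_op m f $$ (k, y))"
    using assms by (intro index_mult_square) auto
  also have "\<dots> = B $$ (x, y) * diag_op m f $$ (y, y)"
    using assms by (intro sum_lessThan_single) (auto simp: index_diag_op)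
  finally show ?thesis
    using assms by (simp add: index_diag_op)
qed

lemma index_diag_op_mult:
  assumes "B \<in> carrier_mat (2 ^ m) (2 ^ m)" "x < 2 ^ m" "y < 2 ^ m"
  shows "(diag_op m f * B) $$ (x, y) = f x * B $$ (x, y)"
proof -
  have "(diag_op m f * B) $$ (x, y) = (\<Sum>k<2 ^ m. diag_op m f $$ (x, k) * B $$ (k, y))"
    using assms by (intro index_mult_square) auto
  also have "\<dots> = diag_op m f $$ (x, x) * B $$ (x, y)"
    using assms by (intro sum_lessThan_single) (auto simp: index_diag_op)
  finally show ?thesis
    using assms by (simp add: index_diag_op)
qed

lemma diag_op_mult: "diag_op m f * diag_op m g = diag_op m (\<lambda>x. f x * g x)"
  by (rule square_mat_eqI[of _ "2 ^ m"]) (auto simp: index_diag_op_mult index_diag_op)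

lemma diag_op_one: "diag_op m (\<lambda>x. 1) = 1\<^sub>m (2 ^ m)"
  by (rule square_mat_eqI[of _ "2 ^ m"]) (auto simp: index_diag_op)

definition perm_op :: "nat \<Rightarrow> (nat \<Rightarrow> nat) \<Rightarrow> complex mat" where
  "perm_op m f = mat (2 ^ m) (2 ^ m) (\<lambda>(x, y). if x = f y then 1 else 0)"

lemma perm_op_carrier [simp]: "perm_op m f \<in> carrier_mat (2 ^ m) (2 ^ m)"
  by (simp add: perm_op_def)

lemma index_perm_op: "x < 2 ^ m \<Longrightarrow> y < 2 ^ m \<Longrightarrow> perm_op m f $$ (x, y) = (if x = f y then 1 else 0)"
  by (simp add: perm_op_def)

lemma index_mult_perm_op:
  assumes "B \<in> carrier_mat (2 ^ m) (2 ^ m)" "x < 2 ^ m" "y < 2 ^ m" "f y < 2 ^ m"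
  shows "(B * perm_op m f) $$ (x, y) = B $$ (x, f y)"
proof -
  have "(B * perm_op m f) $$ (x, y) = (\<Sum>k<2 ^ m. B $$ (x, k) * perm_op m f $$ (k, y))"
    using assms by (intro index_mult_square) auto
  also have "\<dots> = B $$ (x, f y) * perm_op m f $$ (f y, y)"
    using assms by (intro sum_lessThan_single) (auto simp: index_perm_op)
  finally show ?thesis
    using assms by (simp add: index_perm_op)
qed

lemma index_perm_op_mult:
  assumes "B \<in> carrier_mat (2 ^ m) (2 ^ m)" "x < 2 ^ m" "y < 2 ^ m" "g x < 2 ^ m"
    and "\<And>z. z < 2 ^ m \<Longrightarrow> f z = x \<longleftrightarrow> z = g x"
  shows "(perm_op m f * B) $$ (x, y) = B $$ (g x, y)"
proof -
  have "(perm_op m f * B) $$ (x, y) = (\<Sum>k<2 ^ m. perm_op m f $$ (x, k) * B $$ (k, y))"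
    using assms by (intro index_mult_square) auto
  also have "\<dots> = perm_op m f $$ (x, g x) * B $$ (g x, y)"
    using assms by (intro sum_lessThan_single) (auto simp: index_perm_op)
  finally show ?thesis
    using assms(2,4) assms(5)[of "g x"] by (simp add: index_perm_op)
qed

lemma perm_op_mult:
  "(\<And>y. y < 2 ^ m \<Longrightarrow> g y < 2 ^ m) \<Longrightarrow> perm_op m f * perm_op m g = perm_op m (\<lambda>y. f (g y))"
  by (rule square_mat_eqI[of _ "2 ^ m"]) (auto simp: index_mult_perm_op index_perm_op)


lemma single_qubit_gate_cond_iff:
  "(\<forall>k. 1 \<le> k \<and> k \<noteq> Suc p \<longrightarrow> qbit x k = qbit y k) \<longleftrightarrow> agree_off {p} x y"
proof
  assume h: "\<forall>k. 1 \<le> k \<and> k \<noteq> Suc p \<longrightarrow> qbit x k = qbit y k"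
  show "agree_off {p} x y"
    unfolding agree_off_def
  proof (intro allI impI)
    fix j
    assume "j \<notin> {p}"
    then have "qbit x (Suc j) = qbit y (Suc j)"
      using h by auto
    then show "bit x j = bit y j"
      by (simp add: qbit_eq_bitval bitval_def split: if_splits)
  qed
next
  assume h: "agree_off {p} x y"
  show "\<forall>k. 1 \<le> k \<and> k \<noteq> Suc p \<longrightarrow> qbit x k = qbit y k"
  proof (intro allI impI)
    fix k
    assume "1 \<le> k \<and> k \<noteq> Suc p"
    then obtain j where "k = Suc j" "j \<noteq> p"
      by (cases k) auto
    then show "qbit x k = qbit y k"
      using h by (simp add: qbit_eq_bitval bitval_def agree_off_def)
  qed
qed

lemma single_qubit_gate_carrier [simp]: "single_qubit_gate m t U \<in> carrier_mat (2 ^ m) (2 ^ m)"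
  by (simp add: single_qubit_gate_def)

lemma index_single_qubit_gate:
  "x < 2 ^ m \<Longrightarrow> y < 2 ^ m \<Longrightarrow> single_qubit_gate m (Suc p) U $$ (x, y) =
     (if agree_off {p} x y then U $$ (bitval x p, bitval y p) else 0)"
  unfolding single_qubit_gate_def using single_qubit_gate_cond_iff[of p x y]
  by (simp add: qbit_eq_bitval)

lemma index_mult_single_qubit_gate:
  assumes "B \<in> carrier_mat (2 ^ m) (2 ^ m)" "p < m" "x < 2 ^ m" "y < 2 ^ m"
  shows "(B * single_qubit_gate m (Suc p) U) $$ (x, y) =
    B $$ (x, unset_bit p y) * U $$ (0, bitval y p) + B $$ (x, set_bit p y) * U $$ (1, bitval y p)"
proof -
  let ?G = "single_qubit_gate m (Suc p) U"
  have "(B * ?G) $$ (x, y) =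
      B $$ (x, unset_bit p y) * ?G $$ (unset_bit p y, y) + B $$ (x, set_bit p y) * ?G $$ (set_bit p y, y)"
    using assms
    by (intro index_mult_two_supported_column)
      (auto simp: index_single_qubit_gate unset_bit_less_exp set_bit_less_exp unset_bit_neq_set_bit
        dest: agree_off_single_cases)
  then show ?thesis
    using assms by (simp add: index_single_qubit_gate unset_bit_less_exp set_bit_less_exp)
qed

lemma index_single_qubit_gate_mult:
  assumes "B \<in> carrier_mat (2 ^ m) (2 ^ m)" "p < m" "x < 2 ^ m" "y < 2 ^ m"
  shows "(single_qubit_gate m (Suc p) U * B) $$ (x, y) =
    U $$ (bitval x p, 0) * B $$ (unset_bit p x, y) + U $$ (bitval x p, 1) * B $$ (set_bit p x, y)"
proof -
  let ?G = "single_qubit_gate m (Suc p) U"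
  have "(?G * B) $$ (x, y) =
      ?G $$ (x, unset_bit p x) * B $$ (unset_bit p x, y) + ?G $$ (x, set_bit p x) * B $$ (set_bit p x, y)"
    using assms
    by (intro index_mult_two_supported_row)
      (auto simp: index_single_qubit_gate unset_bit_less_exp set_bit_less_exp unset_bit_neq_set_bit
        agree_off_sym[of _ x] dest: agree_off_single_cases)
  then show ?thesis
    using assms by (simp add: index_single_qubit_gate unset_bit_less_exp set_bit_less_exp agree_off_sym[of _ x])
qed

lemma index_mult_2x2:
  "A \<in> carrier_mat 2 2 \<Longrightarrow> B \<in> carrier_mat 2 2 \<Longrightarrow> i < 2 \<Longrightarrow> j < 2 \<Longrightarrow>
   (A * B) $$ (i, j) = A $$ (i, 0) * B $$ (0, j) + A $$ (i, 1) * B $$ (1, j)"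
  by (subst index_mult_square[of _ 2]) (auto simp: numeral_2_eq_2)

lemma single_qubit_gate_mult:
  assumes "U \<in> carrier_mat 2 2" "V \<in> carrier_mat 2 2" "p < m"
  shows "single_qubit_gate m (Suc p) U * single_qubit_gate m (Suc p) V = single_qubit_gate m (Suc p) (U * V)"
proof (rule square_mat_eqI[of _ "2 ^ m"])
  fix x y :: nat
  assume xy: "x < 2 ^ m" "y < 2 ^ m"
  have agree: "agree_off {p} x (unset_bit p y) \<longleftrightarrow> agree_off {p} x y"
    "agree_off {p} x (set_bit p y) \<longleftrightarrow> agree_off {p} x y"
    by (metis agree_off_sym agree_off_trans agree_off_unset_bit agree_off_set_bit)+
  show "(single_qubit_gate m (Suc p) U * single_qubit_gate m (Suc p) V) $$ (x, y) =
      single_qubit_gate m (Suc p) (U * V) $$ (x, y)"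
    using assms xy
    by (simp add: index_mult_single_qubit_gate index_single_qubit_gate index_mult_2x2 agree
        unset_bit_less_exp set_bit_less_exp del: index_mult_mat)
qed (use assms in auto)

lemma single_qubit_gate_one: "single_qubit_gate m (Suc p) (1\<^sub>m 2) = 1\<^sub>m (2 ^ m)"
  by (rule square_mat_eqI[of _ "2 ^ m"])
    (auto simp: index_single_qubit_gate dest: agree_off_single_eqI)

definition cnot_map :: "nat \<Rightarrow> nat \<Rightarrow> nat \<Rightarrow> nat" where
  "cnot_map c t y = (if bit y c then flip_bit t y else y)"

lemma cnot_gate_carrier [simp]: "cnot_gate m c t \<in> carrier_mat (2 ^ m) (2 ^ m)"
  by (simp add: cnot_gate_def)

lemma index_cnot_gate:
  "x < 2 ^ m \<Longrightarrow> y < 2 ^ m \<Longrightarrow>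
   cnot_gate m (Suc c) (Suc t) $$ (x, y) = (if x = cnot_map c t y then 1 else 0)"
  by (auto simp: cnot_gate_def qbit_eq_bitval bitval_def cnot_map_def flip_bit_eq_add flip_bit_eq_diff)

lemma bit_cnot_map:
  "c \<noteq> t \<Longrightarrow> bit (cnot_map c t y) j = (if j = t \<and> bit y c then \<not> bit y j else bit y j)"
  by (auto simp: cnot_map_def bit_flip_bit_iff)

lemma cnot_map_involution [simp]: "c \<noteq> t \<Longrightarrow> cnot_map c t (cnot_map c t y) = y"
  by (rule bit_eqI) (auto simp: bit_cnot_map)

lemma cnot_map_less_exp: "t < m \<Longrightarrow> y < 2 ^ m \<Longrightarrow> cnot_map c t y < 2 ^ m"
  by (simp add: cnot_map_def flip_bit_less_exp)

lemma index_cnot_gate_mult: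
  assumes "B \<in> carrier_mat (2 ^ m) (2 ^ m)" "t < m" "c \<noteq> t" "x < 2 ^ m" "y < 2 ^ m"
  shows "(cnot_gate m (Suc c) (Suc t) * B) $$ (x, y) = B $$ (cnot_map c t x, y)"
proof -
  let ?G = "cnot_gate m (Suc c) (Suc t)"
  have "(?G * B) $$ (x, y) = (\<Sum>k<2 ^ m. ?G $$ (x, k) * B $$ (k, y))"
    using assms by (intro index_mult_square) auto
  also have "\<dots> = ?G $$ (x, cnot_map c t x) * B $$ (cnot_map c t x, y)"
    using assms by (intro sum_lessThan_single) (auto simp: index_cnot_gate cnot_map_less_exp)
  finally show ?thesis
    using assms by (simp add: index_cnot_gate cnot_map_less_exp)
qed

text \<open>Qubit indices of \<open>gate\<close> are bit positions, counted from 0; \<open>gate_mat\<close> translates them to the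
  1-based qubit numbering of \<open>single_qubit_gate\<close> and \<open>cnot_gate\<close>.\<close>

datatype gate = Had nat | Phs real nat | Rot real nat | CX nat nat

definition hadamard :: "complex mat" where
  "hadamard = mat 2 2 (\<lambda>(i, j). if i = 1 \<and> j = 1 then - (1 / sqrt 2) else 1 / sqrt 2)"

definition phase_mat :: "real \<Rightarrow> complex mat" where
  "phase_mat th = mat 2 2 (\<lambda>(i, j). if i = j then (if i = 0 then 1 else cis th) else 0)"

definition rot_mat :: "real \<Rightarrow> complex mat" where
  "rot_mat ph = mat 2 2 (\<lambda>(i, j).
     if i = j then of_real (cos ph) else if i = 0 then - of_real (sin ph) else of_real (sin ph))"

fun gate_mat :: "nat \<Rightarrow> gate \<Rightarrow> complex mat" where
  "gate_mat m (Had p) = single_qubit_gate m (Suc p) hadamard"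
| "gate_mat m (Phs th p) = single_qubit_gate m (Suc p) (phase_mat th)"
| "gate_mat m (Rot ph p) = single_qubit_gate m (Suc p) (rot_mat ph)"
| "gate_mat m (CX c t) = cnot_gate m (Suc c) (Suc t)"

fun valid_gate :: "nat \<Rightarrow> gate \<Rightarrow> bool" where
  "valid_gate m (Had p) = (p < m)"
| "valid_gate m (Phs th p) = (p < m)"
| "valid_gate m (Rot ph p) = (p < m)"
| "valid_gate m (CX c t) = (c < m \<and> t < m \<and> c \<noteq> t)"

fun gate_inv :: "gate \<Rightarrow> gate" where
  "gate_inv (Had p) = Had p"
| "gate_inv (Phs th p) = Phs (- th) p"
| "gate_inv (Rot ph p) = Rot (- ph) p"
| "gate_inv (CX c t) = CX c t"

lemma hadamard_carrier [simp]: "hadamard \<in> carrier_mat 2 2"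
  by (simp add: hadamard_def)

lemma phase_mat_carrier [simp]: "phase_mat th \<in> carrier_mat 2 2"
  by (simp add: phase_mat_def)

lemma rot_mat_carrier [simp]: "rot_mat th \<in> carrier_mat 2 2"
  by (simp add: rot_mat_def)

lemma mat2_eqI:
  "A \<in> carrier_mat 2 2 \<Longrightarrow> B \<in> carrier_mat 2 2 \<Longrightarrow> A $$ (0, 0) = B $$ (0, 0) \<Longrightarrow>
   A $$ (0, 1) = B $$ (0, 1) \<Longrightarrow> A $$ (1, 0) = B $$ (1, 0) \<Longrightarrow> A $$ (1, 1) = B $$ (1, 1) \<Longrightarrow> A = B"
  by (rule eq_matI) (auto simp: less_2_cases_iff)

lemma hadamard_mult_hadamard: "hadamard * hadamard = 1\<^sub>m 2"
proof -
  have sqrt2: "complex_of_real (sqrt 2) * complex_of_real (sqrt 2) = 2"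
    by (simp flip: of_real_mult)
  then have "(1 / complex_of_real (sqrt 2)) * (1 / complex_of_real (sqrt 2)) = 1 / 2"
    by simp
  with sqrt2 show ?thesis
    by (intro mat2_eqI) (auto simp: index_mult_2x2 hadamard_def simp del: index_mult_mat)
qed

lemma phase_mat_mult: "phase_mat a * phase_mat b = phase_mat (a + b)"
  by (rule mat2_eqI) (auto simp: index_mult_2x2 phase_mat_def cis_mult simp del: index_mult_mat)

lemma phase_mat_0: "phase_mat 0 = 1\<^sub>m 2"
  by (rule mat2_eqI) (auto simp: phase_mat_def)

lemma rot_mat_mult: "rot_mat a * rot_mat b = rot_mat (a + b)"
  by (rule mat2_eqI)
    (auto simp: index_mult_2x2 rot_mat_def cos_add sin_add algebra_simps simp del: index_mult_mat
      simp flip: of_real_mult of_real_add of_real_diff)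

lemma rot_mat_0: "rot_mat 0 = 1\<^sub>m 2"
  by (rule mat2_eqI) (auto simp: rot_mat_def)

lemma gate_mat_carrier [simp]: "gate_mat m g \<in> carrier_mat (2 ^ m) (2 ^ m)"
  by (cases g) auto

lemma gate_mat_CX: "gate_mat m (CX c t) = perm_op m (cnot_map c t)"
  by (rule square_mat_eqI[of _ "2 ^ m"]) (auto simp: index_cnot_gate index_perm_op)

lemma gate_mat_inv: "valid_gate m g \<Longrightarrow> gate_mat m (gate_inv g) * gate_mat m g = 1\<^sub>m (2 ^ m)"
proof (induction g)
  case (CX c t)
  then have "perm_op m (cnot_map c t) * perm_op m (cnot_map c t) = perm_op m id"
    by (simp add: perm_op_mult cnot_map_less_exp id_def)
  moreover have "perm_op m id = 1\<^sub>m (2 ^ m)"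
    by (rule square_mat_eqI[of _ "2 ^ m"]) (auto simp: index_perm_op)
  ultimately show ?case
    by (simp only: gate_inv.simps gate_mat_CX)
qed (simp_all add: single_qubit_gate_mult single_qubit_gate_one hadamard_mult_hadamard
    phase_mat_mult phase_mat_0 rot_mat_mult rot_mat_0)

definition adjoint2 :: "complex mat \<Rightarrow> complex mat" where
  "adjoint2 U = mat 2 2 (\<lambda>(i, j). cnj (U $$ (j, i)))"

lemma unitary2_hadamard: "unitary2 hadamard"
proof -
  have "adjoint2 hadamard = hadamard"
    by (rule mat2_eqI) (auto simp: adjoint2_def hadamard_def)
  then show ?thesis
    by (simp add: unitary2_def flip: adjoint2_def add: hadamard_mult_hadamard)
qed

lemma unitary2_phase_mat: "unitary2 (phase_mat a)"
proof -
  have "adjoint2 (phase_mat a) = phase_mat (- a)"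
    by (rule mat2_eqI) (auto simp: adjoint2_def phase_mat_def cis_cnj)
  then show ?thesis
    by (simp add: unitary2_def flip: adjoint2_def add: phase_mat_mult phase_mat_0)
qed

lemma unitary2_rot_mat: "unitary2 (rot_mat a)"
proof -
  have "adjoint2 (rot_mat a) = rot_mat (- a)"
    by (rule mat2_eqI) (auto simp: adjoint2_def rot_mat_def)
  then show ?thesis
    by (simp add: unitary2_def flip: adjoint2_def add: rot_mat_mult rot_mat_0)
qed

lemma elementary_single_qubit_gate:
  "p < m \<Longrightarrow> unitary2 U \<Longrightarrow> elementary_gate m (single_qubit_gate m (Suc p) U)"
  unfolding elementary_gate_def by (intro disjI2 exI[of _ "Suc p"] exI[of _ U]) auto

lemma elementary_gate_mat: "valid_gate m g \<Longrightarrow> elementary_gate m (gate_mat m g)"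
proof (induction g)
  case (CX c t)
  then show ?case
    unfolding elementary_gate_def by (intro disjI1 exI[of _ "Suc c"] exI[of _ "Suc t"]) auto
qed (auto intro: elementary_single_qubit_gate simp: unitary2_hadamard unitary2_phase_mat unitary2_rot_mat)

definition circuit_mat :: "nat \<Rightarrow> gate list \<Rightarrow> complex mat" where
  "circuit_mat m gs = circuit_product (2 ^ m) (map (gate_mat m) gs)"

lemma circuit_mat_Nil [simp]: "circuit_mat m [] = 1\<^sub>m (2 ^ m)"
  by (simp add: circuit_mat_def circuit_product_def)

lemma circuit_mat_Cons: "circuit_mat m (g # gs) = gate_mat m g * circuit_mat m gs"
  by (simp add: circuit_mat_def circuit_product_def)

lemma circuit_mat_carrier [simp]: "circuit_mat m gs \<in> carrier_mat (2 ^ m) (2 ^ m)"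
  by (induction gs) (auto simp: circuit_mat_Cons)

lemma circuit_mat_single [simp]: "circuit_mat m [g] = gate_mat m g"
  by (simp add: circuit_mat_Cons right_mult_one_mat[OF gate_mat_carrier])

lemma one_mult_circuit_mat [simp]: "1\<^sub>m (2 ^ m) * circuit_mat m gs = circuit_mat m gs"
  by (rule left_mult_one_mat[OF circuit_mat_carrier])

lemma circuit_mat_append: "circuit_mat m (xs @ ys) = circuit_mat m xs * circuit_mat m ys"
proof (induction xs)
  case (Cons g xs)
  have "circuit_mat m ((g # xs) @ ys) = gate_mat m g * (circuit_mat m xs * circuit_mat m ys)"
    using Cons.IH by (simp add: circuit_mat_Cons)
  also have "\<dots> = (gate_mat m g * circuit_mat m xs) * circuit_mat m ys"
    by (rule assoc_mult_mat[symmetric, of _ "2 ^ m" "2 ^ m" _ "2 ^ m" _ "2 ^ m"]) auto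
  finally show ?case
    by (simp add: circuit_mat_Cons)
qed simp

definition inverse_circuit :: "gate list \<Rightarrow> gate list" where
  "inverse_circuit gs = rev (map gate_inv gs)"

lemma circuit_mat_inverse:
  "\<forall>g\<in>set gs. valid_gate m g \<Longrightarrow> circuit_mat m (inverse_circuit gs) * circuit_mat m gs = 1\<^sub>m (2 ^ m)"
proof (induction gs)
  case (Cons g gs)
  let ?X = "circuit_mat m (inverse_circuit gs)" and ?Y = "circuit_mat m gs"
  let ?G' = "gate_mat m (gate_inv g)" and ?G = "gate_mat m g"
  have "circuit_mat m (inverse_circuit (g # gs)) * circuit_mat m (g # gs) = ?X * ?G' * (?G * ?Y)"
    by (simp add: inverse_circuit_def circuit_mat_append circuit_mat_Cons right_mult_one_mat[OF gate_mat_carrier])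
  also have "\<dots> = ?X * ((?G' * ?G) * ?Y)"
    by (simp add: assoc_mult_mat[of _ "2 ^ m" "2 ^ m" _ "2 ^ m" _ "2 ^ m"])
  also have "?G' * ?G = 1\<^sub>m (2 ^ m)"
    using Cons.prems by (simp add: gate_mat_inv)
  finally show ?case
    using Cons by simp
qed (simp add: inverse_circuit_def)

lemma valid_inverse_circuit:
  "\<forall>g\<in>set gs. valid_gate m g \<Longrightarrow> \<forall>g\<in>set (inverse_circuit gs). valid_gate m g"
proof -
  have "valid_gate m g \<Longrightarrow> valid_gate m (gate_inv g)" for g
    by (cases g) auto
  then show "\<forall>g\<in>set gs. valid_gate m g \<Longrightarrow> \<forall>g\<in>set (inverse_circuit gs). valid_gate m g"
    by (auto simp: inverse_circuit_def)
qed

lemma length_inverse_circuit [simp]: "length (inverse_circuit gs) = length gs"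
  by (simp add: inverse_circuit_def)


lemma single_qubit_gate_phase_mat:
  "single_qubit_gate m (Suc p) (phase_mat th) = diag_op m (\<lambda>x. cis (th * bitval x p))"
  by (rule square_mat_eqI[of _ "2 ^ m"])
    (auto simp: index_single_qubit_gate index_diag_op phase_mat_def bitval_def dest: agree_off_single_eqI)

text \<open>A controlled phase from two CNOTs, using
  \<open>th * b\<^sub>c * b\<^sub>t = th / 2 * (b\<^sub>c + b\<^sub>t - (b\<^sub>c XOR b\<^sub>t))\<close>.\<close>

definition cphase_circ :: "real \<Rightarrow> nat \<Rightarrow> nat \<Rightarrow> gate list" where
  "cphase_circ th c t = [Phs (th / 2) c, Phs (th / 2) t, CX c t, Phs (- th / 2) t, CX c t]"

lemma circuit_mat_cphase:
  assumes "c < m" "t < m" "c \<noteq> t"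
  shows "circuit_mat m (cphase_circ th c t) = diag_op m (\<lambda>x. cis (th * bitval x c * bitval x t))"
proof (rule square_mat_eqI[of _ "2 ^ m"])
  fix x y :: nat
  assume xy: "x < 2 ^ m" "y < 2 ^ m"
  have "circuit_mat m (cphase_circ th c t) $$ (x, y) =
      cis (th / 2 * bitval x c) * (cis (th / 2 * bitval x t) *
        (cis (- th / 2 * bitval (cnot_map c t x) t) * (if cnot_map c t (cnot_map c t x) = y then 1 else 0)))"
    using assms xy
    by (simp add: cphase_circ_def circuit_mat_Cons single_qubit_gate_phase_mat index_diag_op_mult
        index_cnot_gate_mult cnot_map_less_exp)
  then show "circuit_mat m (cphase_circ th c t) $$ (x, y) =
      diag_op m (\<lambda>x. cis (th * bitval x c * bitval x t)) $$ (x, y)"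
    using assms xy
    by (cases "bit x c"; cases "bit x t") (auto simp: index_diag_op bit_cnot_map bitval_def cis_mult)
qed (auto simp: cphase_circ_def circuit_mat_Cons)

lemma length_cphase_circ [simp]: "length (cphase_circ th c t) = 5"
  by (simp add: cphase_circ_def)

fun phase_ladder :: "real \<Rightarrow> nat list \<Rightarrow> gate list" where
  "phase_ladder a [] = []"
| "phase_ladder a (p # ps) = Phs a p # phase_ladder (2 * a) ps"

fun cphase_ladder :: "real \<Rightarrow> nat \<Rightarrow> nat list \<Rightarrow> gate list" where
  "cphase_ladder a c [] = []"
| "cphase_ladder a c (p # ps) = cphase_circ a c p @ cphase_ladder (2 * a) c ps"

lemma circuit_mat_phase_ladder:
  "\<forall>p\<in>set ps. p < m \<Longrightarrow> circuit_mat m (phase_ladder a ps) = diag_op m (\<lambda>x. cis (a * reg_val ps x))"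
proof (induction ps arbitrary: a)
  case (Cons p ps)
  then have "circuit_mat m (phase_ladder a (p # ps)) =
      diag_op m (\<lambda>x. cis (a * bitval x p)) * diag_op m (\<lambda>x. cis (2 * a * reg_val ps x))"
    by (simp add: circuit_mat_Cons single_qubit_gate_phase_mat)
  also have "\<dots> = diag_op m (\<lambda>x. cis (a * reg_val (p # ps) x))"
    by (simp add: diag_op_mult cis_mult algebra_simps)
  finally show ?case .
qed (simp add: diag_op_one)

lemma circuit_mat_cphase_ladder:
  "c < m \<Longrightarrow> \<forall>p\<in>set ps. p < m \<and> p \<noteq> c \<Longrightarrow>
   circuit_mat m (cphase_ladder a c ps) = diag_op m (\<lambda>x. cis (a * bitval x c * reg_val ps x))"
proof (induction ps arbitrary: a)
  case (Cons p ps)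
  then have "circuit_mat m (cphase_ladder a c (p # ps)) =
      diag_op m (\<lambda>x. cis (a * bitval x c * bitval x p)) * diag_op m (\<lambda>x. cis (2 * a * bitval x c * reg_val ps x))"
    by (simp add: circuit_mat_append circuit_mat_cphase)
  also have "\<dots> = diag_op m (\<lambda>x. cis (a * bitval x c * reg_val (p # ps) x))"
    by (simp add: diag_op_mult cis_mult algebra_simps)
  finally show ?case .
qed (simp add: diag_op_one)

lemma valid_phase_ladder: "\<forall>p\<in>set ps. p < m \<Longrightarrow> \<forall>g\<in>set (phase_ladder a ps). valid_gate m g"
  by (induction ps arbitrary: a) auto

lemma valid_cphase_ladder:
  "c < m \<Longrightarrow> \<forall>p\<in>set ps. p < m \<and> p \<noteq> c \<Longrightarrow> \<forall>g\<in>set (cphase_ladder a c ps). valid_gate m g"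
  by (induction ps arbitrary: a) (auto simp: cphase_circ_def)

lemma length_phase_ladder [simp]: "length (phase_ladder a ps) = length ps"
  by (induction ps arbitrary: a) auto

lemma length_cphase_ladder [simp]: "length (cphase_ladder a c ps) = 5 * length ps"
  by (induction ps arbitrary: a) auto


section \<open>Quantum Fourier transform\<close>

lemma cis_add_2pi_int: "n \<in> \<int> \<Longrightarrow> cis (a + 2 * pi * n) = cis a"
  by (simp add: cis_mult[symmetric])

fun qft_circ_rev :: "nat list \<Rightarrow> gate list" where
  "qft_circ_rev [] = []"
| "qft_circ_rev (q # rqs) =
     qft_circ_rev rqs @ cphase_ladder (2 * pi / 2 ^ Suc (length rqs)) q (rev rqs) @ [Had q]"

definition qft_circ :: "nat list \<Rightarrow> gate list" where
  "qft_circ qs = qft_circ_rev (rev qs)"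

lemma qft_circ_Nil [simp]: "qft_circ [] = []"
  by (simp add: qft_circ_def)

lemma qft_circ_snoc:
  "qft_circ (qs @ [q]) = qft_circ qs @ cphase_ladder (2 * pi / 2 ^ Suc (length qs)) q qs @ [Had q]"
  by (simp add: qft_circ_def)

text \<open>The Fourier transform on the register \<open>qs\<close> without the final bit reversal: the output
  register is read in reverse order.\<close>

definition qft_mat :: "nat \<Rightarrow> nat list \<Rightarrow> complex mat" where
  "qft_mat m qs = mat (2 ^ m) (2 ^ m) (\<lambda>(x, y). if agree_off (set qs) x y then
      complex_of_real (1 / sqrt (2 ^ length qs)) *
      cis (2 * pi * real (reg_val (rev qs) x) * real (reg_val qs y) / 2 ^ length qs) else 0)"

lemma qft_mat_carrier [simp]: "qft_mat m qs \<in> carrier_mat (2 ^ m) (2 ^ m)"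
  by (simp add: qft_mat_def)

lemma index_qft_mat:
  "x < 2 ^ m \<Longrightarrow> y < 2 ^ m \<Longrightarrow> qft_mat m qs $$ (x, y) = (if agree_off (set qs) x y then
      complex_of_real (1 / sqrt (2 ^ length qs)) *
      cis (2 * pi * real (reg_val (rev qs) x) * real (reg_val qs y) / 2 ^ length qs) else 0)"
  by (simp add: qft_mat_def)

lemma qft_mat_Nil: "qft_mat m [] = 1\<^sub>m (2 ^ m)"
  by (rule square_mat_eqI[of _ "2 ^ m"]) (auto simp: index_qft_mat agree_off_empty)

lemma index_hadamard_cis:
  "b < 2 \<Longrightarrow> b' < 2 \<Longrightarrow> hadamard $$ (b, b') = complex_of_real (1 / sqrt 2) * cis (pi * b * b')"
  by (auto simp: hadamard_def less_2_cases_iff)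

lemma qft_step_phase:
  fixes R V bx yb k :: nat
  shows "complex_of_real (1 / sqrt (2 ^ k)) * cis (2 * pi * R * V / 2 ^ k) *
       cis (2 * pi / 2 ^ Suc k * bx * V) * (complex_of_real (1 / sqrt 2) * cis (pi * bx * yb)) =
     complex_of_real (1 / sqrt (2 ^ Suc k)) * cis (2 * pi * (bx + 2 * R) * (V + 2 ^ k * yb) / 2 ^ Suc k)"
proof -
  have "2 * pi * (bx + 2 * R) * (V + 2 ^ k * yb) / 2 ^ Suc k =
      (2 * pi * R * V / 2 ^ k + 2 * pi / 2 ^ Suc k * bx * V + pi * bx * yb) + 2 * pi * (R * yb)"
    by (simp add: field_simps)
  then have "cis (2 * pi * (bx + 2 * R) * (V + 2 ^ k * yb) / 2 ^ Suc k) =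
      cis (2 * pi * R * V / 2 ^ k + 2 * pi / 2 ^ Suc k * bx * V + pi * bx * yb)"
    by (metis cis_add_2pi_int Ints_of_nat)
  moreover have "complex_of_real (1 / sqrt (2 ^ Suc k)) =
      complex_of_real (1 / sqrt (2 ^ k)) * complex_of_real (1 / sqrt 2)"
    by (simp add: real_sqrt_mult flip: of_real_mult)
  ultimately show ?thesis
    by (simp only: ac_simps cis_mult)
qed

lemma agree_off_snoc_set_bit:
  "agree_off (set (qs @ [q])) x y \<Longrightarrow> bit x q \<Longrightarrow> agree_off (set qs) x (set_bit q y)"
  by (auto simp: agree_off_def bit_set_bit_iff)

lemma agree_off_snoc_unset_bit:
  "agree_off (set (qs @ [q])) x y \<Longrightarrow> \<not> bit x q \<Longrightarrow> agree_off (set qs) x (unset_bit q y)"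
  by (auto simp: agree_off_def bit_unset_bit_iff)

lemma not_agree_off_set_bit: "q \<notin> set qs \<Longrightarrow> \<not> bit x q \<Longrightarrow> \<not> agree_off (set qs) x (set_bit q y)"
  by (auto simp: agree_off_def bit_set_bit_iff)

lemma not_agree_off_unset_bit: "q \<notin> set qs \<Longrightarrow> bit x q \<Longrightarrow> \<not> agree_off (set qs) x (unset_bit q y)"
  by (auto simp: agree_off_def bit_unset_bit_iff)

lemma not_agree_off_snoc:
  "\<not> agree_off (set (qs @ [q])) x y \<Longrightarrow>
   \<not> agree_off (set qs) x (set_bit q y) \<and> \<not> agree_off (set qs) x (unset_bit q y)"
  by (auto simp: agree_off_def bit_set_bit_iff bit_unset_bit_iff)

lemma qft_mat_snoc:
  assumes q: "q \<notin> set qs" "q < m"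
  shows "qft_mat m qs * diag_op m (\<lambda>x. cis (2 * pi / 2 ^ Suc (length qs) * bitval x q * reg_val qs x)) *
      single_qubit_gate m (Suc q) hadamard = qft_mat m (qs @ [q])"
    (is "?Q * ?D * ?G = _")
proof (rule square_mat_eqI[of _ "2 ^ m"])
  fix x y :: nat
  assume xy: "x < 2 ^ m" "y < 2 ^ m"
  let ?k = "length qs" and ?R = "reg_val (rev qs) x" and ?V = "reg_val qs y"
  have us: "unset_bit q y < 2 ^ m" "set_bit q y < 2 ^ m"
    using xy q by (auto simp: unset_bit_less_exp set_bit_less_exp)
  have expand: "(?Q * ?D * ?G) $$ (x, y) =
      ?Q $$ (x, unset_bit q y) * cis (2 * pi / 2 ^ Suc ?k * 0 * reg_val qs (unset_bit q y)) *
        hadamard $$ (0, bitval y q) +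
      ?Q $$ (x, set_bit q y) * cis (2 * pi / 2 ^ Suc ?k * 1 * reg_val qs (set_bit q y)) *
        hadamard $$ (1, bitval y q)"
    using xy q us by (simp add: index_mult_single_qubit_gate index_mult_diag_op)
  show "(?Q * ?D * ?G) $$ (x, y) = qft_mat m (qs @ [q]) $$ (x, y)"
  proof (cases "agree_off (set (qs @ [q])) x y")
    case False
    then show ?thesis
      using expand not_agree_off_snoc[OF False] xy us by (simp add: index_qft_mat)
  next
    case True
    \<comment> \<open>only the summand whose bit \<open>q\<close> agrees with \<open>x\<close> survives\<close>
    then have "(?Q * ?D * ?G) $$ (x, y) =
        complex_of_real (1 / sqrt (2 ^ ?k)) * cis (2 * pi * ?R * ?V / 2 ^ ?k) *
        cis (2 * pi / 2 ^ Suc ?k * bitval x q * ?V) *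
        (complex_of_real (1 / sqrt 2) * cis (pi * bitval x q * bitval y q))"
      using expand xy us q
      by (cases "bit x q")
        (simp_all add: index_qft_mat index_hadamard_cis bitval_eq reg_val_set_bit_other
          reg_val_unset_bit_other agree_off_snoc_set_bit agree_off_snoc_unset_bit
          not_agree_off_set_bit not_agree_off_unset_bit)
    also have "\<dots> = complex_of_real (1 / sqrt (2 ^ Suc ?k)) *
        cis (2 * pi * (bitval x q + 2 * ?R) * (?V + 2 ^ ?k * bitval y q) / 2 ^ Suc ?k)"
      by (rule qft_step_phase)
    also have "\<dots> = qft_mat m (qs @ [q]) $$ (x, y)"
      using True xy by (simp add: index_qft_mat reg_val_snoc)
    finally show ?thesis .
  qed
qed simp_all

lemma circuit_mat_qft:
  "distinct qs \<Longrightarrow> \<forall>p\<in>set qs. p < m \<Longrightarrow> circuit_mat m (qft_circ qs) = qft_mat m qs"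
proof (induction qs rule: rev_induct)
  case (snoc q qs)
  let ?D = "diag_op m (\<lambda>x. cis (2 * pi / 2 ^ Suc (length qs) * bitval x q * reg_val qs x))"
  let ?G = "single_qubit_gate m (Suc q) hadamard"
  have qs: "distinct qs" "q \<notin> set qs" "\<forall>p\<in>set qs. p < m \<and> p \<noteq> q" "q < m"
    using snoc.prems by auto
  then have "circuit_mat m (qft_circ (qs @ [q])) = qft_mat m qs * (?D * ?G)"
    using snoc.IH by (simp add: qft_circ_snoc circuit_mat_append circuit_mat_cphase_ladder)
  also have "\<dots> = qft_mat m qs * ?D * ?G"
    by (simp add: assoc_mult_mat[of _ "2 ^ m" "2 ^ m" _ "2 ^ m" _ "2 ^ m"])
  also have "\<dots> = qft_mat m (qs @ [q])"
    using qs by (intro qft_mat_snoc) auto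
  finally show ?case .
qed (simp add: qft_mat_Nil)

lemma valid_qft_circ:
  "distinct qs \<Longrightarrow> \<forall>p\<in>set qs. p < m \<Longrightarrow> \<forall>g\<in>set (qft_circ qs). valid_gate m g"
proof (induction qs rule: rev_induct)
  case (snoc q qs)
  then have "\<forall>g\<in>set (cphase_ladder a q qs). valid_gate m g" for a
    by (intro valid_cphase_ladder) auto
  then show ?case
    using snoc by (auto simp: qft_circ_snoc)
qed simp

lemma length_qft_circ: "length (qft_circ qs) \<le> 3 * length qs ^ 2"
proof (induction qs rule: rev_induct)
  case (snoc q qs)
  have "length (qft_circ (qs @ [q])) = length (qft_circ qs) + 5 * length qs + 1"
    by (simp add: qft_circ_snoc)
  also have "\<dots> \<le> 3 * length (qs @ [q]) ^ 2"
    using snoc by (simp add: power2_eq_square algebra_simps)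
  finally show ?case .
qed simp


section \<open>Bit reversal and the DFT\<close>

definition swap_circ :: "nat \<Rightarrow> nat \<Rightarrow> gate list" where
  "swap_circ a b = [CX a b, CX b a, CX a b]"

definition swap_bits :: "nat \<Rightarrow> nat \<Rightarrow> nat \<Rightarrow> nat" where
  "swap_bits a b y = (if bit y a = bit y b then y else flip_bit a (flip_bit b y))"

lemma bit_swap_bits: "bit (swap_bits a b y) j = bit y (if j = a then b else if j = b then a else j)"
  by (auto simp: swap_bits_def bit_flip_bit_iff)

lemma swap_bits_swap_bits: "swap_bits a b (swap_bits a b y) = y"
  by (rule bit_eqI) (auto simp: bit_swap_bits)

lemma cnot_map_triple: "a \<noteq> b \<Longrightarrow> cnot_map a b (cnot_map b a (cnot_map a b x)) = swap_bits a b x"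
  by (rule bit_eqI) (auto simp: bit_cnot_map bit_swap_bits)

lemma circuit_mat_swap:
  assumes "a < m" "b < m" "a \<noteq> b"
  shows "circuit_mat m (swap_circ a b) = perm_op m (swap_bits a b)"
proof (rule square_mat_eqI[of _ "2 ^ m"])
  fix x y :: nat
  assume xy: "x < 2 ^ m" "y < 2 ^ m"
  then have "circuit_mat m (swap_circ a b) $$ (x, y) =
      (if cnot_map a b (cnot_map b a (cnot_map a b x)) = y then 1 else 0)"
    using assms by (simp add: swap_circ_def circuit_mat_Cons index_cnot_gate_mult cnot_map_less_exp)
  also have "\<dots> = perm_op m (swap_bits a b) $$ (x, y)"
    using assms xy by (auto simp: cnot_map_triple index_perm_op swap_bits_swap_bits)
  finally show "circuit_mat m (swap_circ a b) $$ (x, y) = perm_op m (swap_bits a b) $$ (x, y)" .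
qed simp_all

function reverse_bits :: "nat list \<Rightarrow> nat \<Rightarrow> nat" where
  "reverse_bits [] y = y"
| "reverse_bits [q] y = y"
| "reverse_bits (q # q2 # qs) y = swap_bits q (last (q2 # qs)) (reverse_bits (butlast (q2 # qs)) y)"
  by pat_completeness auto
termination by (relation "measure (\<lambda>(qs, y). length qs)") auto

function reverse_circ :: "nat list \<Rightarrow> gate list" where
  "reverse_circ [] = []"
| "reverse_circ [q] = []"
| "reverse_circ (q # q2 # qs) = swap_circ q (last (q2 # qs)) @ reverse_circ (butlast (q2 # qs))"
  by pat_completeness auto
termination by (relation "measure length") auto

lemma first_last_induct [case_names Nil single Cons_snoc]:
  assumes "P []" "\<And>q. P [q]" "\<And>q mid l. P mid \<Longrightarrow> P (q # mid @ [l])"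
  shows "P xs"
proof (induction "length xs" arbitrary: xs rule: less_induct)
  case less
  show ?case
  proof (cases xs)
    case (Cons q rest)
    then show ?thesis
      using less assms by (cases rest rule: rev_cases) auto
  qed (simp add: assms)
qed

lemma reverse_bits_Cons_snoc [simp]: "reverse_bits (q # mid @ [l]) y = swap_bits q l (reverse_bits mid y)"
  by (cases mid) simp_all

lemma reverse_circ_Cons_snoc [simp]: "reverse_circ (q # mid @ [l]) = swap_circ q l @ reverse_circ mid"
  by (cases mid) simp_all

lemma bit_reverse_bits_outside: "j \<notin> set qs \<Longrightarrow> bit (reverse_bits qs y) j = bit y j"
  by (induction qs rule: first_last_induct) (auto simp: bit_swap_bits)

lemma reverse_bits_less_exp: "\<forall>p\<in>set qs. p < m \<Longrightarrow> y < 2 ^ m \<Longrightarrow> reverse_bits qs y < 2 ^ m"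
  unfolding less_exp_iff_no_high_bits using bit_reverse_bits_outside by (metis not_le)

lemma circuit_mat_reverse:
  "distinct qs \<Longrightarrow> \<forall>p\<in>set qs. p < m \<Longrightarrow> circuit_mat m (reverse_circ qs) = perm_op m (reverse_bits qs)"
proof (induction qs rule: first_last_induct)
  case (Cons_snoc q mid l)
  then have "circuit_mat m (reverse_circ (q # mid @ [l])) = perm_op m (swap_bits q l) * perm_op m (reverse_bits mid)"
    by (simp add: circuit_mat_append circuit_mat_swap)
  also have "\<dots> = perm_op m (\<lambda>y. swap_bits q l (reverse_bits mid y))"
    using Cons_snoc.prems by (simp add: perm_op_mult reverse_bits_less_exp)
  also have "(\<lambda>y. swap_bits q l (reverse_bits mid y)) = reverse_bits (q # mid @ [l])"
    by auto
  finally show ?case .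
qed (simp_all add: perm_op_def one_mat_def)

lemma length_reverse_circ: "length (reverse_circ qs) \<le> 3 * length qs"
  by (induction qs rule: first_last_induct) (auto simp: swap_circ_def)

lemma valid_reverse_circ:
  "distinct qs \<Longrightarrow> \<forall>p\<in>set qs. p < m \<Longrightarrow> \<forall>g\<in>set (reverse_circ qs). valid_gate m g"
  by (induction qs rule: first_last_induct) (auto simp: swap_circ_def)

lemma reg_val_reverse_bits: "distinct qs \<Longrightarrow> reg_val (rev qs) (reverse_bits qs y) = reg_val qs y"
proof (induction qs rule: first_last_induct)
  case (Cons_snoc q mid l)
  let ?z = "swap_bits q l (reverse_bits mid y)"
  have mid: "distinct mid" "q \<notin> set mid" "l \<notin> set mid" "q \<noteq> l"
    using Cons_snoc.prems by auto
  have "reg_val (rev mid) ?z = reg_val (rev mid) (reverse_bits mid y)"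
    using mid by (intro reg_val_cong) (auto simp: bit_swap_bits)
  moreover have "bitval ?z l = bitval y q" "bitval ?z q = bitval y l"
    using mid by (simp_all add: bitval_def bit_swap_bits bit_reverse_bits_outside)
  ultimately show ?case
    using Cons_snoc.IH mid by (simp add: reg_val_snoc)
qed simp_all

definition dft_mat :: "nat \<Rightarrow> nat list \<Rightarrow> complex mat" where
  "dft_mat m qs = mat (2 ^ m) (2 ^ m) (\<lambda>(x, y). if agree_off (set qs) x y then
      complex_of_real (1 / sqrt (2 ^ length qs)) *
      cis (2 * pi * real (reg_val qs x) * real (reg_val qs y) / 2 ^ length qs) else 0)"

lemma dft_mat_carrier [simp]: "dft_mat m qs \<in> carrier_mat (2 ^ m) (2 ^ m)"
  by (simp add: dft_mat_def)

definition dft_circ :: "nat list \<Rightarrow> gate list" where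
  "dft_circ qs = qft_circ (rev qs) @ reverse_circ qs"

lemma agree_off_reverse_bits: "agree_off (set qs) x (reverse_bits qs y) = agree_off (set qs) x y"
  by (auto simp: agree_off_def bit_reverse_bits_outside)

lemma circuit_mat_dft:
  assumes "distinct qs" "\<forall>p\<in>set qs. p < m"
  shows "circuit_mat m (dft_circ qs) = dft_mat m qs"
proof (rule square_mat_eqI[of _ "2 ^ m"])
  fix x y :: nat
  assume xy: "x < 2 ^ m" "y < 2 ^ m"
  have "circuit_mat m (dft_circ qs) = qft_mat m (rev qs) * perm_op m (reverse_bits qs)"
    using assms by (simp add: dft_circ_def circuit_mat_append circuit_mat_qft circuit_mat_reverse)
  then have "circuit_mat m (dft_circ qs) $$ (x, y) = qft_mat m (rev qs) $$ (x, reverse_bits qs y)"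
    using assms xy by (simp add: index_mult_perm_op reverse_bits_less_exp)
  also have "\<dots> = dft_mat m qs $$ (x, y)"
    using assms xy
    by (simp add: index_qft_mat dft_mat_def reverse_bits_less_exp agree_off_reverse_bits reg_val_reverse_bits)
  finally show "circuit_mat m (dft_circ qs) $$ (x, y) = dft_mat m qs $$ (x, y)" .
qed simp_all

lemma valid_dft_circ:
  "distinct qs \<Longrightarrow> \<forall>p\<in>set qs. p < m \<Longrightarrow> \<forall>g\<in>set (dft_circ qs). valid_gate m g"
  using valid_qft_circ[of "rev qs" m] valid_reverse_circ[of qs m] by (auto simp: dft_circ_def)

lemma length_dft_circ: "length (dft_circ qs) \<le> 3 * length qs ^ 2 + 3 * length qs"
  using length_qft_circ[of "rev qs"] length_reverse_circ[of qs] by (simp add: dft_circ_def)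


section \<open>Fourier adders\<close>

definition reg_add :: "nat list \<Rightarrow> (nat \<Rightarrow> nat) \<Rightarrow> nat \<Rightarrow> nat" where
  "reg_add qs k y = set_reg qs (reg_val qs y + k y) y"

lemma reg_add_less_exp: "\<forall>p\<in>set qs. p < m \<Longrightarrow> y < 2 ^ m \<Longrightarrow> reg_add qs k y < 2 ^ m"
  by (simp add: reg_add_def set_reg_less_exp)

lemma agree_off_reg_add: "agree_off (set qs) x (reg_add qs k y) = agree_off (set qs) x y"
  by (metis agree_off_set_reg agree_off_sym agree_off_trans reg_add_def)

lemma reg_val_reg_add: "distinct qs \<Longrightarrow> reg_val qs (reg_add qs k y) = (reg_val qs y + k y) mod 2 ^ length qs"
  by (simp add: reg_add_def reg_val_set_reg)

lemma cis_mult_mod: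
  fixes R V s K :: nat
  assumes "0 < K"
  shows "cis (2 * pi * s * R / K) * cis (2 * pi * R * V / K) = cis (2 * pi * R * ((V + s) mod K) / K)"
proof -
  have split: "real V + real s = real ((V + s) mod K) + real K * real ((V + s) div K)"
    by (metis mod_div_mult_eq mult.commute of_nat_add of_nat_mult)
  have "2 * pi * s * R / K + 2 * pi * R * V / K = 2 * pi * R * (real V + real s) / K"
    by (simp add: field_simps add_divide_distrib)
  also have "\<dots> = 2 * pi * R * ((V + s) mod K) / K + 2 * pi * real (R * ((V + s) div K))"
    using assms by (simp only: split) (simp add: field_simps)
  finally show ?thesis
    by (metis cis_add_2pi_int cis_mult Ints_of_nat)
qed

text \<open>Draper's adder: conjugated by the Fourier transform, the diagonal phase
  \<open>cis (2 pi k R / 2^n)\<close> becomes addition of \<open>k\<close> modulo \<open>2^n\<close>.\<close>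

lemma diag_op_qft_mat:
  assumes qs: "distinct qs" "\<forall>p\<in>set qs. p < m"
    and k: "\<And>x y. agree_off (set qs) x y \<Longrightarrow> k x = k y"
  shows "diag_op m (\<lambda>x. cis (2 * pi * real (k x) * real (reg_val (rev qs) x) / 2 ^ length qs)) * qft_mat m qs =
    qft_mat m qs * perm_op m (reg_add qs k)"
    (is "?D * ?Q = _")
proof (rule square_mat_eqI[of _ "2 ^ m"])
  fix x y :: nat
  assume xy: "x < 2 ^ m" "y < 2 ^ m"
  have add: "reg_add qs k y < 2 ^ m"
    using qs xy by (simp add: reg_add_less_exp)
  show "(?D * ?Q) $$ (x, y) = (?Q * perm_op m (reg_add qs k)) $$ (x, y)"
  proof (cases "agree_off (set qs) x y")
    case True
    have "cis (2 * pi * k y * reg_val (rev qs) x / 2 ^ length qs) *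
        cis (2 * pi * reg_val (rev qs) x * reg_val qs y / 2 ^ length qs) =
        cis (2 * pi * reg_val (rev qs) x * ((reg_val qs y + k y) mod 2 ^ length qs) / 2 ^ length qs)"
      using cis_mult_mod[of "2 ^ length qs"] by simp
    then show ?thesis
      using xy add qs True k[OF True]
      by (simp add: index_diag_op_mult index_mult_perm_op index_qft_mat agree_off_reg_add
          reg_val_reg_add ac_simps)
  qed (use xy add in \<open>simp add: index_diag_op_mult index_mult_perm_op index_qft_mat agree_off_reg_add\<close>)
qed simp_all

lemma circuit_mat_fourier_adder:
  assumes qs: "distinct qs" "\<forall>p\<in>set qs. p < m"
    and k: "\<And>x y. agree_off (set qs) x y \<Longrightarrow> k x = k y"
    and phase: "circuit_mat m Ds =
      diag_op m (\<lambda>x. cis (2 * pi * real (k x) * real (reg_val (rev qs) x) / 2 ^ length qs))"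
  shows "circuit_mat m (inverse_circuit (qft_circ qs) @ Ds @ qft_circ qs) = perm_op m (reg_add qs k)"
proof -
  let ?C = "circuit_mat m (inverse_circuit (qft_circ qs))"
  have "circuit_mat m (inverse_circuit (qft_circ qs) @ Ds @ qft_circ qs) =
      ?C * (qft_mat m qs * perm_op m (reg_add qs k))"
    using qs by (simp add: circuit_mat_append circuit_mat_qft phase diag_op_qft_mat[OF qs k])
  also have "\<dots> = (?C * qft_mat m qs) * perm_op m (reg_add qs k)"
    by (simp add: assoc_mult_mat[of _ "2 ^ m" "2 ^ m" _ "2 ^ m" _ "2 ^ m"])
  also have "?C * qft_mat m qs = 1\<^sub>m (2 ^ m)"
    using qs circuit_mat_inverse[OF valid_qft_circ[OF qs]] by (simp add: circuit_mat_qft)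
  finally show ?thesis
    by (simp add: left_mult_one_mat[OF perm_op_carrier])
qed

definition add_const_circ :: "nat list \<Rightarrow> nat \<Rightarrow> gate list" where
  "add_const_circ qs c = inverse_circuit (qft_circ qs) @
     phase_ladder (2 * pi * real c / 2 ^ length qs) (rev qs) @ qft_circ qs"

definition add_bit_circ :: "nat list \<Rightarrow> nat \<Rightarrow> gate list" where
  "add_bit_circ qs ctl = inverse_circuit (qft_circ qs) @
     cphase_ladder (2 * pi / 2 ^ length qs) ctl (rev qs) @ qft_circ qs"

lemma circuit_mat_add_const:
  "distinct qs \<Longrightarrow> \<forall>p\<in>set qs. p < m \<Longrightarrow>
   circuit_mat m (add_const_circ qs c) = perm_op m (reg_add qs (\<lambda>_. c))"
  unfolding add_const_circ_def
  by (rule circuit_mat_fourier_adder) (simp_all add: circuit_mat_phase_ladder)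

lemma circuit_mat_add_bit:
  assumes "distinct qs" "\<forall>p\<in>set qs. p < m" "ctl < m" "ctl \<notin> set qs"
  shows "circuit_mat m (add_bit_circ qs ctl) = perm_op m (reg_add qs (\<lambda>y. bitval y ctl))"
  unfolding add_bit_circ_def
proof (rule circuit_mat_fourier_adder)
  show "circuit_mat m (cphase_ladder (2 * pi / 2 ^ length qs) ctl (rev qs)) =
      diag_op m (\<lambda>x. cis (2 * pi * real (bitval x ctl) * real (reg_val (rev qs) x) / 2 ^ length qs))"
  proof -
    have "\<forall>p\<in>set (rev qs). p < m \<and> p \<noteq> ctl"
      using assms by auto
    then show ?thesis
      using assms by (simp add: circuit_mat_cphase_ladder ac_simps)
  qed
  show "\<And>x y. agree_off (set qs) x y \<Longrightarrow> bitval x ctl = bitval y ctl"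
    using assms by (auto simp: agree_off_def bitval_def)
qed (use assms in simp_all)

lemma valid_add_const_circ:
  "distinct qs \<Longrightarrow> \<forall>p\<in>set qs. p < m \<Longrightarrow> \<forall>g\<in>set (add_const_circ qs c). valid_gate m g"
  unfolding add_const_circ_def using valid_qft_circ valid_inverse_circuit valid_phase_ladder[of "rev qs" m]
  by (metis Un_iff set_append set_rev)

lemma valid_add_bit_circ:
  assumes "distinct qs" "\<forall>p\<in>set qs. p < m" "ctl < m" "ctl \<notin> set qs"
  shows "\<forall>g\<in>set (add_bit_circ qs ctl). valid_gate m g"
proof -
  have "\<forall>g\<in>set (cphase_ladder (2 * pi / 2 ^ length qs) ctl (rev qs)). valid_gate m g"
    using assms by (intro valid_cphase_ladder) auto
  moreover have "\<forall>g\<in>set (qft_circ qs). valid_gate m g"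
    using assms by (intro valid_qft_circ)
  ultimately show ?thesis
    using valid_inverse_circuit by (auto simp: add_bit_circ_def)
qed

lemma length_add_const_circ: "length (add_const_circ qs c) \<le> 6 * length qs ^ 2 + length qs"
  using length_qft_circ[of qs] by (simp add: add_const_circ_def)

lemma length_add_bit_circ: "length (add_bit_circ qs c) \<le> 6 * length qs ^ 2 + 5 * length qs"
  using length_qft_circ[of qs] by (simp add: add_bit_circ_def)

lemma reg_add_inverse:
  assumes "distinct qs" "a + b = 2 ^ length qs"
  shows "reg_add qs (\<lambda>_. b) (reg_add qs (\<lambda>_. a) z) = z"
proof (rule agree_off_reg_val_eqI[of qs])
  show "agree_off (set qs) (reg_add qs (\<lambda>_. b) (reg_add qs (\<lambda>_. a) z)) z"
    by (metis agree_off_reg_add agree_off_refl agree_off_sym)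
  have "reg_val qs (reg_add qs (\<lambda>_. b) (reg_add qs (\<lambda>_. a) z)) = (reg_val qs z + (a + b)) mod 2 ^ length qs"
    using assms(1) by (simp add: reg_val_reg_add mod_add_left_eq add.assoc)
  also have "\<dots> = reg_val qs z"
    using assms(2) reg_val_less[of qs z] by simp
  finally show "reg_val qs (reg_add qs (\<lambda>_. b) (reg_add qs (\<lambda>_. a) z)) = reg_val qs z" .
qed

lemma agree_off_reg_add_const:
  assumes "distinct qs" "t \<notin> set qs" "agree_off {t} u v"
  shows "agree_off {t} (reg_add qs (\<lambda>_. c) u) (reg_add qs (\<lambda>_. c) v)"
proof -
  have "reg_val qs u = reg_val qs v"
    using reg_val_agree_off[OF assms(3)] assms(2) by auto
  then have "reg_val qs (reg_add qs (\<lambda>_. c) u) = reg_val qs (reg_add qs (\<lambda>_. c) v)"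
    using assms(1) by (simp add: reg_val_reg_add)
  then show ?thesis
    unfolding agree_off_def
  proof (intro allI impI)
    fix j
    assume "j \<notin> {t}"
    then show "bit (reg_add qs (\<lambda>_. c) u) j = bit (reg_add qs (\<lambda>_. c) v) j"
      using assms(3) reg_val_eq_imp_bit_eq[OF \<open>reg_val qs (reg_add qs _ u) = _\<close>]
      by (cases "j \<in> set qs") (auto simp: reg_add_def bit_set_reg_outside agree_off_def)
  qed
qed

fun cnot_fanout :: "nat \<Rightarrow> nat list \<Rightarrow> nat \<Rightarrow> nat" where
  "cnot_fanout c [] y = y"
| "cnot_fanout c (p # ps) y = cnot_map c p (cnot_fanout c ps y)"

lemma bit_cnot_fanout:
  "distinct ps \<Longrightarrow> c \<notin> set ps \<Longrightarrow>
   bit (cnot_fanout c ps y) j = (if j \<in> set ps \<and> bit y c then \<not> bit y j else bit y j)"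
proof (induction ps arbitrary: j)
  case (Cons p ps)
  then have "c \<noteq> p" "bit (cnot_fanout c ps y) c = bit y c" "bit (cnot_fanout c ps y) p = bit y p"
    by auto
  then show ?case
    using Cons by (simp add: bit_cnot_map)
qed simp

lemma cnot_fanout_less_exp: "\<forall>p\<in>set ps. p < m \<Longrightarrow> y < 2 ^ m \<Longrightarrow> cnot_fanout c ps y < 2 ^ m"
  by (induction ps) (auto simp: cnot_map_less_exp)

lemma circuit_mat_cnot_fanout:
  "\<forall>p\<in>set ps. p < m \<Longrightarrow> circuit_mat m (map (CX c) ps) = perm_op m (cnot_fanout c ps)"
proof (induction ps)
  case (Cons p ps)
  then have "circuit_mat m (map (CX c) (p # ps)) = perm_op m (cnot_map c p) * perm_op m (cnot_fanout c ps)"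
    by (simp only: list.map circuit_mat_Cons gate_mat_CX) simp
  also have "\<dots> = perm_op m (\<lambda>y. cnot_map c p (cnot_fanout c ps y))"
    using Cons.prems by (simp add: perm_op_mult cnot_fanout_less_exp)
  also have "(\<lambda>y. cnot_map c p (cnot_fanout c ps y)) = cnot_fanout c (p # ps)"
    by auto
  finally show ?case .
qed (simp add: perm_op_def one_mat_def)


lemma sin_cos_pi_8:
  "2 * sin (pi / 8) * cos (pi / 8) = 1 / sqrt 2" "cos (pi / 8) ^ 2 - sin (pi / 8) ^ 2 = 1 / sqrt 2"
proof -
  have quarter: "2 * (pi / 8) = pi / 4" and half_sqrt: "sqrt 2 / 2 = 1 / sqrt (2::real)"
    by (simp_all add: field_simps)
  show "2 * sin (pi / 8) * cos (pi / 8) = 1 / sqrt 2"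
    using sin_double[of "pi / 8"] sin_45 quarter half_sqrt by simp
  show "cos (pi / 8) ^ 2 - sin (pi / 8) ^ 2 = 1 / sqrt 2"
    using cos_double[of "pi / 8"] cos_45 quarter half_sqrt by simp
qed

lemma rot_mat_conj_not:
  "i < 2 \<Longrightarrow> j < 2 \<Longrightarrow>
   rot_mat (- (pi / 8)) $$ (i, 0) * rot_mat (pi / 8) $$ (1, j) +
   rot_mat (- (pi / 8)) $$ (i, 1) * rot_mat (pi / 8) $$ (0, j) = hadamard $$ (i, j)"
proof -
  assume ij: "i < 2" "j < 2"
  let ?c = "complex_of_real (cos (pi / 8))" and ?s = "complex_of_real (sin (pi / 8))"
  have "?c * ?s + ?s * ?c = complex_of_real (2 * sin (pi / 8) * cos (pi / 8))"
    by (simp add: algebra_simps)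
  moreover have "?c * ?c - ?s * ?s = complex_of_real (cos (pi / 8) ^ 2 - sin (pi / 8) ^ 2)"
    by (simp add: power2_eq_square)
  ultimately have "?c * ?s + ?s * ?c = 1 / complex_of_real (sqrt 2)"
    "?c * ?c - ?s * ?s = 1 / complex_of_real (sqrt 2)"
    by (simp_all only: sin_cos_pi_8) simp_all
  then show ?thesis
    using ij by (auto simp: less_2_cases_iff rot_mat_def hadamard_def algebra_simps)
qed

lemma rot_mat_conj_id:
  "i < 2 \<Longrightarrow> j < 2 \<Longrightarrow>
   rot_mat (- (pi / 8)) $$ (i, 0) * rot_mat (pi / 8) $$ (0, j) +
   rot_mat (- (pi / 8)) $$ (i, 1) * rot_mat (pi / 8) $$ (1, j) = (if i = j then 1 else 0)"
  using index_mult_2x2[of "rot_mat (- (pi / 8))" "rot_mat (pi / 8)" i j]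
  by (simp add: rot_mat_mult rot_mat_0)

definition chadamard_entry :: "nat \<Rightarrow> nat \<Rightarrow> nat \<Rightarrow> nat \<Rightarrow> complex" where
  "chadamard_entry c t x y =
     (if agree_off {t} x y then
        (if bit y c then hadamard $$ (bitval x t, bitval y t) else if bitval x t = bitval y t then 1 else 0)
      else 0)"

text \<open>Conjugating the CNOT by rotations gives a controlled Hadamard, because
  \<open>R(-pi/8) X R(pi/8) = H\<close> (lemma \<open>rot_mat_conj_not\<close>).\<close>

definition chadamard_circ :: "nat \<Rightarrow> nat \<Rightarrow> gate list" where
  "chadamard_circ c t = [Rot (- (pi / 8)) t, CX c t, Rot (pi / 8) t]"

lemma cnot_map_unset_bit:
  "c \<noteq> t \<Longrightarrow> cnot_map c t (unset_bit t x) = (if bit x c then set_bit t x else unset_bit t x)"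
  by (rule bit_eqI) (auto simp: bit_cnot_map bit_set_bit_iff bit_unset_bit_iff)

lemma cnot_map_set_bit:
  "c \<noteq> t \<Longrightarrow> cnot_map c t (set_bit t x) = (if bit x c then unset_bit t x else set_bit t x)"
  by (rule bit_eqI) (auto simp: bit_cnot_map bit_set_bit_iff bit_unset_bit_iff)

lemma circuit_mat_chadamard:
  assumes "c < m" "t < m" "c \<noteq> t"
  shows "circuit_mat m (chadamard_circ c t) = mat (2 ^ m) (2 ^ m) (\<lambda>(x, y). chadamard_entry c t x y)"
proof (rule square_mat_eqI[of _ "2 ^ m"])
  fix x y :: nat
  assume xy: "x < 2 ^ m" "y < 2 ^ m"
  let ?A = "rot_mat (- (pi / 8))" and ?B = "single_qubit_gate m (Suc t) (rot_mat (pi / 8))"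
  have less: "unset_bit t x < 2 ^ m" "set_bit t x < 2 ^ m"
    "cnot_map c t (unset_bit t x) < 2 ^ m" "cnot_map c t (set_bit t x) < 2 ^ m"
    using assms xy by (auto simp: unset_bit_less_exp set_bit_less_exp cnot_map_less_exp)
  have expand: "circuit_mat m (chadamard_circ c t) $$ (x, y) =
      ?A $$ (bitval x t, 0) * ?B $$ (cnot_map c t (unset_bit t x), y) +
      ?A $$ (bitval x t, 1) * ?B $$ (cnot_map c t (set_bit t x), y)"
    using assms xy less
    by (simp add: chadamard_circ_def circuit_mat_Cons index_single_qubit_gate_mult index_cnot_gate_mult
        right_mult_one_mat[OF single_qubit_gate_carrier])
  have control: "agree_off {t} x y \<Longrightarrow> bit y c = bit x c"
    using assms by (auto simp: agree_off_def)
  show "circuit_mat m (chadamard_circ c t) $$ (x, y) =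
      mat (2 ^ m) (2 ^ m) (\<lambda>(x, y). chadamard_entry c t x y) $$ (x, y)"
    using assms xy less control rot_mat_conj_not[of "bitval x t" "bitval y t"]
      rot_mat_conj_id[of "bitval x t" "bitval y t"]
    unfolding expand
    by (cases "bit x c")
      (auto simp: index_single_qubit_gate cnot_map_unset_bit cnot_map_set_bit agree_off_set_bit_iff
        agree_off_unset_bit_iff chadamard_entry_def)
qed (simp_all add: chadamard_circ_def)

lemma valid_chadamard_circ:
  "c < m \<Longrightarrow> t < m \<Longrightarrow> c \<noteq> t \<Longrightarrow> \<forall>g\<in>set (chadamard_circ c t). valid_gate m g"
  by (auto simp: chadamard_circ_def)

lemma chadamard_entry_sym: "c \<noteq> t \<Longrightarrow> chadamard_entry c t u v = chadamard_entry c t v u"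
proof (cases "agree_off {t} u v")
  case True
  moreover assume "c \<noteq> t"
  ultimately have "bit u c = bit v c"
    by (auto simp: agree_off_def)
  moreover have "hadamard $$ (bitval u t, bitval v t) = hadamard $$ (bitval v t, bitval u t)"
    by (auto simp: hadamard_def)
  ultimately show ?thesis
    using True by (auto simp: chadamard_entry_def agree_off_sym)
qed (simp add: chadamard_entry_def agree_off_sym)


section \<open>The analytic identity\<close>

text \<open>Column \<open>x\<close> of the butterfly \<open>B\<close> has the entry \<open>bfly_coef0 N x\<close> in row \<open>bfly_row0 N x\<close>
  and the entry \<open>bfly_coef1 N x\<close> in row \<open>bfly_row1 N x\<close>.\<close>

definition bfly_coef0 :: "nat \<Rightarrow> nat \<Rightarrow> real" where
  "bfly_coef0 N x = (if x mod N = 0 then (if x < N then 1 else 0) else 1 / sqrt 2)"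

definition bfly_coef1 :: "nat \<Rightarrow> nat \<Rightarrow> real" where
  "bfly_coef1 N x =
     (if x mod N = 0 then (if x < N then 0 else 1) else if x < N then 1 / sqrt 2 else - (1 / sqrt 2))"

definition bfly_row0 :: "nat \<Rightarrow> nat \<Rightarrow> nat" where
  "bfly_row0 N x = x mod N"

definition bfly_row1 :: "nat \<Rightarrow> nat \<Rightarrow> nat" where
  "bfly_row1 N x = N + (N - x mod N) mod N"

definition dft_entry :: "nat \<Rightarrow> nat \<Rightarrow> nat \<Rightarrow> complex" where
  "dft_entry N z w = complex_of_real (1 / sqrt (2 * real N)) * cis (pi * real w * real z / real N)"

definition dct_dst_entry :: "nat \<Rightarrow> nat \<Rightarrow> nat \<Rightarrow> complex" where
  "dct_dst_entry N y x =
     (if y \<le> N \<and> x \<le> N then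
        complex_of_real (sqrt (2 / real N) * kfac N y * kfac N x * cos (real y * real x * pi / real N))
      else if N < y \<and> N < x then
        \<i> * complex_of_real (sqrt (2 / real N) * sin (real (y - N) * real (x - N) * pi / real N))
      else 0)"

lemma cos_reflect:
  "r \<le> 2 * N \<Longrightarrow> 0 < N \<Longrightarrow> cos (pi * real (2 * N - r) * real t / real N) = cos (pi * real r * real t / real N)"
proof -
  assume "r \<le> 2 * N" "0 < N"
  then have "pi * real (2 * N - r) * real t / real N = 2 * real t * pi - pi * real r * real t / real N"
    by (simp add: of_nat_diff field_simps)
  then show ?thesis
    by (simp add: cos_diff)
qed

lemma sin_reflect:
  "r \<le> 2 * N \<Longrightarrow> 0 < N \<Longrightarrow> sin (pi * real (2 * N - r) * real t / real N) = - sin (pi * real r * real t / real N)"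
proof -
  assume "r \<le> 2 * N" "0 < N"
  then have "pi * real (2 * N - r) * real t / real N = 2 * real t * pi - pi * real r * real t / real N"
    by (simp add: of_nat_diff field_simps)
  then show ?thesis
    by (simp add: sin_diff)
qed

lemma bfly_cases:
  assumes "0 < N" "y < 2 * N"
  obtains "y = 0" | "y = N"
  | "0 < y" "y < N" "y mod N = y" "bfly_row1 N y = 2 * N - y"
  | "N < y" "y mod N = y - N" "bfly_row0 N y = y - N" "bfly_row1 N y = 2 * N - (y - N)" "y - N \<noteq> 0"
proof -
  consider "y = 0" | "y = N" | "0 < y \<and> y < N" | "N < y \<and> y < 2 * N"
    using assms by linarith
  then show ?thesis
  proof cases
    case 3
    then show ?thesis
      using that(3) by (simp add: bfly_row1_def)
  next
    case 4
    then have "y - N < N"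
      by linarith
    with 4 have mod: "y mod N = y - N"
      by (simp add: le_mod_geq)
    moreover have "N - (y - N) < N"
      using 4 by linarith
    ultimately have "bfly_row1 N y = 2 * N - (y - N)"
      using 4 by (simp add: bfly_row1_def)
    then show ?thesis
      using 4 mod that(4) by (simp add: bfly_row0_def)
  qed (use that in auto)
qed

lemma butterfly_cos_sum:
  assumes "0 < N" "y < 2 * N"
  shows "bfly_coef0 N y * cos (pi * real (bfly_row0 N y) * real t / real N) +
      bfly_coef1 N y * cos (pi * real (bfly_row1 N y) * real t / real N) =
    (if y \<le> N then sqrt 2 * kfac N y * cos (pi * real y * real t / real N) else 0)"
  using assms
proof (cases rule: bfly_cases)
  case 3
  then have "bfly_coef0 N y * cos (pi * real (bfly_row0 N y) * real t / real N) +
      bfly_coef1 N y * cos (pi * real (bfly_row1 N y) * real t / real N) =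
      (1 / sqrt 2 + 1 / sqrt 2) * cos (pi * real y * real t / real N)"
    using assms cos_reflect[of y N t]
    by (simp add: bfly_coef0_def bfly_coef1_def bfly_row0_def algebra_simps)
  also have "1 / sqrt 2 + 1 / sqrt 2 = sqrt (2::real)"
    by (simp add: field_simps)
  finally show ?thesis
    using 3 by (simp add: kfac_def)
next
  case 4
  then show ?thesis
    using assms cos_reflect[of "y - N" N t] by (simp add: bfly_coef0_def bfly_coef1_def)
qed (use assms in \<open>simp_all add: bfly_coef0_def bfly_coef1_def bfly_row0_def bfly_row1_def kfac_def\<close>)

lemma butterfly_sin_sum:
  assumes "0 < N" "y < 2 * N"
  shows "bfly_coef0 N y * sin (pi * real (bfly_row0 N y) * real t / real N) +
      bfly_coef1 N y * sin (pi * real (bfly_row1 N y) * real t / real N) =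
    (if y \<le> N then 0 else sqrt 2 * sin (pi * real (y - N) * real t / real N))"
  using assms
proof (cases rule: bfly_cases)
  case 3
  then show ?thesis
    using assms sin_reflect[of y N t] by (simp add: bfly_coef0_def bfly_coef1_def bfly_row0_def)
next
  case 4
  then have "bfly_coef0 N y * sin (pi * real (bfly_row0 N y) * real t / real N) +
      bfly_coef1 N y * sin (pi * real (bfly_row1 N y) * real t / real N) =
      (1 / sqrt 2 + 1 / sqrt 2) * sin (pi * real (y - N) * real t / real N)"
    using assms sin_reflect[of "y - N" N t]
    by (simp add: bfly_coef0_def bfly_coef1_def algebra_simps)
  also have "1 / sqrt 2 + 1 / sqrt 2 = sqrt (2::real)"
    by (simp add: field_simps)
  finally show ?thesis
    using 4 by simp
qed (use assms in \<open>simp_all add: bfly_coef0_def bfly_coef1_def bfly_row0_def bfly_row1_def\<close>)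

lemma dft_butterfly_column:
  assumes "0 < N" "x < 2 * N"
  shows "dft_entry N z (bfly_row0 N x) * bfly_coef0 N x + dft_entry N z (bfly_row1 N x) * bfly_coef1 N x =
    complex_of_real (1 / sqrt (2 * real N)) *
     (complex_of_real (if x \<le> N then sqrt 2 * kfac N x * cos (pi * real x * real z / real N) else 0) +
      \<i> * complex_of_real (if x \<le> N then 0 else sqrt 2 * sin (pi * real (x - N) * real z / real N)))"
proof -
  let ?a0 = "pi * real (bfly_row0 N x) * real z / real N" and ?a1 = "pi * real (bfly_row1 N x) * real z / real N"
  have "cis a = complex_of_real (cos a) + \<i> * complex_of_real (sin a)" for a
    by (simp add: complex_eq_iff)
  then have "dft_entry N z (bfly_row0 N x) * bfly_coef0 N x + dft_entry N z (bfly_row1 N x) * bfly_coef1 N x =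
      complex_of_real (1 / sqrt (2 * real N)) *
       (complex_of_real (bfly_coef0 N x * cos ?a0 + bfly_coef1 N x * cos ?a1) +
        \<i> * complex_of_real (bfly_coef0 N x * sin ?a0 + bfly_coef1 N x * sin ?a1))"
    by (simp add: dft_entry_def algebra_simps)
  then show ?thesis
    by (simp only: butterfly_cos_sum[OF assms] butterfly_sin_sum[OF assms])
qed

lemma sqrt_2_div: "0 < N \<Longrightarrow> 1 / sqrt (2 * real N) * (sqrt 2 * sqrt 2) = sqrt (2 / real N)"
  by (simp add: real_sqrt_divide real_sqrt_mult field_simps)

text \<open>Entry \<open>(y, x)\<close> of \<open>B\<^sup>T F B\<close>, where \<open>F\<close> is the unitary DFT of size \<open>2 N\<close>.\<close>

definition bfly_dft_bfly :: "nat \<Rightarrow> nat \<Rightarrow> nat \<Rightarrow> complex" where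
  "bfly_dft_bfly N y x =
     bfly_coef0 N y * (dft_entry N (bfly_row0 N y) (bfly_row0 N x) * bfly_coef0 N x +
                       dft_entry N (bfly_row0 N y) (bfly_row1 N x) * bfly_coef1 N x) +
     bfly_coef1 N y * (dft_entry N (bfly_row1 N y) (bfly_row0 N x) * bfly_coef0 N x +
                       dft_entry N (bfly_row1 N y) (bfly_row1 N x) * bfly_coef1 N x)"

lemma bfly_dft_bfly_cos:
  assumes N: "0 < N" and xy: "x < 2 * N" "y < 2 * N" "x \<le> N"
  shows "bfly_dft_bfly N y x = dct_dst_entry N y x"
proof -
  let ?c = "1 / sqrt (2 * real N) * sqrt 2 * kfac N x"
  have "bfly_dft_bfly N y x =
      bfly_coef0 N y * complex_of_real (?c * cos (pi * real x * real (bfly_row0 N y) / real N)) +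
      bfly_coef1 N y * complex_of_real (?c * cos (pi * real x * real (bfly_row1 N y) / real N))"
    using N xy(1,3) by (simp add: bfly_dft_bfly_def dft_butterfly_column)
  also have "\<dots> = complex_of_real (?c * (bfly_coef0 N y * cos (pi * real (bfly_row0 N y) * real x / real N) +
      bfly_coef1 N y * cos (pi * real (bfly_row1 N y) * real x / real N)))"
    by (simp add: algebra_simps)
  also have "\<dots> = complex_of_real (?c * (if y \<le> N then sqrt 2 * kfac N y * cos (pi * real y * real x / real N) else 0))"
    using N xy(2) by (simp only: butterfly_cos_sum)
  also have "\<dots> = dct_dst_entry N y x"
  proof -
    have "?c * (sqrt 2 * kfac N y * cos (pi * real y * real x / real N)) =
        (1 / sqrt (2 * real N) * (sqrt 2 * sqrt 2)) * kfac N y * kfac N x * cos (real y * real x * pi / real N)"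
      by (simp add: ac_simps)
    then have "?c * (sqrt 2 * kfac N y * cos (pi * real y * real x / real N)) =
        sqrt (2 / real N) * kfac N y * kfac N x * cos (real y * real x * pi / real N)"
      by (simp only: sqrt_2_div[OF N])
    moreover have "\<not> N < x"
      using xy(3) by simp
    ultimately show ?thesis
      using xy(3) by (cases "y \<le> N") (simp_all add: dct_dst_entry_def del: of_real_mult)
  qed
  finally show ?thesis .
qed

lemma bfly_dft_bfly_sin:
  assumes N: "0 < N" and xy: "x < 2 * N" "y < 2 * N" "N < x"
  shows "bfly_dft_bfly N y x = dct_dst_entry N y x"
proof -
  let ?c = "1 / sqrt (2 * real N) * sqrt 2"
  have "bfly_dft_bfly N y x =
      bfly_coef0 N y * (\<i> * complex_of_real (?c * sin (pi * real (x - N) * real (bfly_row0 N y) / real N))) +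
      bfly_coef1 N y * (\<i> * complex_of_real (?c * sin (pi * real (x - N) * real (bfly_row1 N y) / real N)))"
    using N xy(1,3) by (simp add: bfly_dft_bfly_def dft_butterfly_column)
  also have "\<dots> = \<i> * complex_of_real (?c * (bfly_coef0 N y * sin (pi * real (bfly_row0 N y) * real (x - N) / real N) +
      bfly_coef1 N y * sin (pi * real (bfly_row1 N y) * real (x - N) / real N)))"
    by (simp add: algebra_simps)
  also have "\<dots> = \<i> * complex_of_real (?c * (if y \<le> N then 0 else sqrt 2 * sin (pi * real (y - N) * real (x - N) / real N)))"
    using N xy(2) by (simp only: butterfly_sin_sum)
  also have "\<dots> = dct_dst_entry N y x"
  proof -
    have "?c * (sqrt 2 * sin (pi * real (y - N) * real (x - N) / real N)) =
        (1 / sqrt (2 * real N) * (sqrt 2 * sqrt 2)) * sin (real (y - N) * real (x - N) * pi / real N)"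
      by (simp add: ac_simps)
    then have "?c * (sqrt 2 * sin (pi * real (y - N) * real (x - N) / real N)) =
        sqrt (2 / real N) * sin (real (y - N) * real (x - N) * pi / real N)"
      by (simp only: sqrt_2_div[OF N])
    moreover have "\<not> x \<le> N"
      using xy(3) by simp
    ultimately show ?thesis
      using xy(3) by (cases "y \<le> N") (simp_all add: dct_dst_entry_def del: of_real_mult)
  qed
  finally show ?thesis .
qed

lemma bfly_dft_bfly_eq_dct_dst:
  "0 < N \<Longrightarrow> x < 2 * N \<Longrightarrow> y < 2 * N \<Longrightarrow> bfly_dft_bfly N y x = dct_dst_entry N y x"
  by (cases "x \<le> N") (simp_all add: bfly_dft_bfly_cos bfly_dft_bfly_sin)


section \<open>The butterfly matrix\<close>

text \<open>The circuit acts on \<open>n + 2\<close> qubits: bits \<open>0, \<dots>, n - 1\<close> hold the low part of the data index,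
  bit \<open>n\<close> its top bit, and bit \<open>n + 1\<close> is the ancilla.\<close>

definition width :: "nat \<Rightarrow> nat" where
  "width n = Suc (Suc n)"

lemma width_props: "n < width n" "Suc n < width n" "p < Suc n \<Longrightarrow> p < width n"
  by (auto simp: width_def)

lemma less_exp_width: "(x::nat) < 2 ^ Suc n \<Longrightarrow> x < 2 ^ width n"
  by (simp add: width_def less_trans[OF _ power_strict_increasing_iff[THEN iffD2]])

lemma bit_ancilla_if_not_less:
  assumes "(y::nat) < 2 ^ width n" "\<not> y < 2 ^ Suc n"
  shows "bit y (Suc n)"
proof -
  have "y = y mod 2 ^ Suc n + 2 ^ Suc n * bitval y (Suc n)"
    using assms(1) split_top_bit[of y "Suc n"] by (simp add: width_def)
  then show ?thesis
    using assms(2) by (metis add.right_neutral bitval_def mod_less_divisor mult_0_right zero_less_numeral zero_less_power)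
qed

definition carry_reg :: "nat \<Rightarrow> nat list" where
  "carry_reg n = [0..<n] @ [Suc n]"

definition carry_shift :: "nat \<Rightarrow> nat \<Rightarrow> nat" where
  "carry_shift n = reg_add (carry_reg n) (\<lambda>_. 2 ^ n - 1)"

definition carry_unshift :: "nat \<Rightarrow> nat \<Rightarrow> nat" where
  "carry_unshift n = reg_add (carry_reg n) (\<lambda>_. 2 ^ n + 1)"

definition butterfly_circ :: "nat \<Rightarrow> gate list" where
  "butterfly_circ n = add_const_circ (carry_reg n) (2 ^ n + 1) @ chadamard_circ (Suc n) n @
     add_const_circ (carry_reg n) (2 ^ n - 1)"

text \<open>Adding \<open>2^n - 1\<close> to the low bits, with the ancilla as carry, sets the ancilla exactly when the
  low bits are nonzero.  So \<open>butterfly_mat\<close> applies a Hadamard to the top data bit of the basis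
  vectors with nonzero low bits, and fixes the others.\<close>

definition butterfly_mat :: "nat \<Rightarrow> complex mat" where
  "butterfly_mat n = mat (2 ^ width n) (2 ^ width n) (\<lambda>(x, y).
     chadamard_entry (Suc n) n (carry_shift n x) (carry_shift n y))"

lemma carry_reg_props:
  "distinct (carry_reg n)" "\<forall>p\<in>set (carry_reg n). p < width n" "length (carry_reg n) = Suc n"
  "n \<notin> set (carry_reg n)"
  by (auto simp: carry_reg_def width_def)

lemma carry_shift_inverse: "carry_unshift n (carry_shift n z) = z" "carry_shift n (carry_unshift n z) = z"
proof -
  have "(2 ^ n - 1) + (2 ^ n + 1) = (2::nat) ^ length (carry_reg n)"
    by (simp add: carry_reg_props)
  then show "carry_unshift n (carry_shift n z) = z" "carry_shift n (carry_unshift n z) = z"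
    unfolding carry_shift_def carry_unshift_def
    by (simp_all add: reg_add_inverse carry_reg_props add.commute)
qed

lemma carry_shift_less_exp:
  "y < 2 ^ width n \<Longrightarrow> carry_shift n y < 2 ^ width n"
  "y < 2 ^ width n \<Longrightarrow> carry_unshift n y < 2 ^ width n"
  unfolding carry_shift_def carry_unshift_def by (simp_all add: reg_add_less_exp carry_reg_props)

lemma agree_off_carry_shift_iff: "agree_off {n} (carry_shift n u) (carry_shift n v) = agree_off {n} u v"
proof
  show "agree_off {n} u v \<Longrightarrow> agree_off {n} (carry_shift n u) (carry_shift n v)"
    unfolding carry_shift_def by (rule agree_off_reg_add_const[OF carry_reg_props(1,4)])
  assume "agree_off {n} (carry_shift n u) (carry_shift n v)"
  then have "agree_off {n} (carry_unshift n (carry_shift n u)) (carry_unshift n (carry_shift n v))"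
    unfolding carry_unshift_def by (rule agree_off_reg_add_const[OF carry_reg_props(1,4)])
  then show "agree_off {n} u v"
    by (simp add: carry_shift_inverse)
qed

lemma bit_carry_shift_data: "bit (carry_shift n z) n = bit z n"
  by (simp add: carry_shift_def reg_add_def bit_set_reg_outside carry_reg_props(4))

lemma bit_carry_shift_flag:
  assumes x: "x < 2 ^ Suc n"
  shows "bit (carry_shift n x) (Suc n) \<longleftrightarrow> x mod 2 ^ n \<noteq> 0"
proof -
  let ?N = "2 ^ n :: nat" and ?z = "carry_shift n x"
  have reg_val_carry: "reg_val (carry_reg n) z = z mod ?N + ?N * bitval z (Suc n)" for z
    by (simp add: carry_reg_def reg_val_snoc reg_val_upt)
  have "bitval x (Suc n) = 0"
    using not_bit_if_less_exp[OF x] by (simp add: bitval_def)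
  have "reg_val (carry_reg n) ?z = (reg_val (carry_reg n) x + (?N - 1)) mod 2 ^ Suc n"
    by (simp add: carry_shift_def reg_val_reg_add carry_reg_props(1,3))
  also have "reg_val (carry_reg n) x = x mod ?N"
    using \<open>bitval x (Suc n) = 0\<close> by (simp add: reg_val_carry)
  also have "(x mod ?N + (?N - 1)) mod 2 ^ Suc n = x mod ?N + (?N - 1)"
  proof (rule mod_less)
    have "x mod ?N < ?N" "0 < ?N"
      by simp_all
    then show "x mod ?N + (?N - 1) < 2 ^ Suc n"
      by (simp only: power_Suc)
  qed
  finally have "?z mod ?N + ?N * bitval ?z (Suc n) = x mod ?N + (?N - 1)"
    by (simp only: reg_val_carry)
  moreover have "?z mod ?N < ?N" "0 < ?N"
    by simp_all
  moreover have flag: "c \<longleftrightarrow> xm \<noteq> 0"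
    if "r + N * (if c then 1 else 0) = xm + (N - 1)" "r < N" "0 < N" for r N xm :: nat and c
    using that by (cases c) auto
  ultimately show ?thesis
    using flag[where r = "?z mod ?N" and N = ?N and xm = "x mod ?N" and c = "bit ?z (Suc n)"] unfolding bitval_def by blast
qed

lemma circuit_mat_butterfly: "circuit_mat (width n) (butterfly_circ n) = butterfly_mat n"
proof -
  let ?m = "width n"
  let ?C = "mat (2 ^ ?m) (2 ^ ?m) (\<lambda>(x, y). chadamard_entry (Suc n) n x y)"
  have "circuit_mat ?m (butterfly_circ n) = perm_op ?m (carry_unshift n) * (?C * perm_op ?m (carry_shift n))"
    using carry_reg_props width_props
    by (simp add: butterfly_circ_def circuit_mat_append circuit_mat_add_const circuit_mat_chadamard
        carry_shift_def carry_unshift_def)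
  also have "\<dots> = butterfly_mat n"
  proof (rule square_mat_eqI[of _ "2 ^ ?m"])
    fix x y :: nat
    assume xy: "x < 2 ^ ?m" "y < 2 ^ ?m"
    then have "(perm_op ?m (carry_unshift n) * (?C * perm_op ?m (carry_shift n))) $$ (x, y) =
        (?C * perm_op ?m (carry_shift n)) $$ (carry_shift n x, y)"
      by (intro index_perm_op_mult) (auto simp: carry_shift_less_exp dest: arg_cong[of _ _ "carry_shift n"],
          auto simp: carry_shift_inverse)
    then show "(perm_op ?m (carry_unshift n) * (?C * perm_op ?m (carry_shift n))) $$ (x, y) = butterfly_mat n $$ (x, y)"
      using xy carry_shift_less_exp by (simp add: index_mult_perm_op butterfly_mat_def)
  qed (simp_all add: butterfly_mat_def)
  finally show ?thesis .
qed

lemma valid_butterfly_circ: "\<forall>g\<in>set (butterfly_circ n). valid_gate (width n) g"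
  using valid_add_const_circ[OF carry_reg_props(1,2)] valid_chadamard_circ[OF width_props(2,1)]
  by (auto simp: butterfly_circ_def)

lemma length_butterfly_circ: "length (butterfly_circ n) \<le> 12 * (n + 1) ^ 2 + 2 * (n + 1) + 3"
proof -
  have adder: "length (add_const_circ (carry_reg n) c) \<le> 6 * (n + 1) ^ 2 + (n + 1)" for c
    using length_add_const_circ[of "carry_reg n" c] by (simp add: carry_reg_props(3))
  show ?thesis
    using adder[of "2 ^ n + 1"] adder[of "2 ^ n - 1"] by (simp add: butterfly_circ_def chadamard_circ_def)
qed

lemma butterfly_mat_carrier [simp]: "butterfly_mat n \<in> carrier_mat (2 ^ width n) (2 ^ width n)"
  by (simp add: butterfly_mat_def)

lemma butterfly_mat_sym:
  "x < 2 ^ width n \<Longrightarrow> y < 2 ^ width n \<Longrightarrow> butterfly_mat n $$ (x, y) = butterfly_mat n $$ (y, x)"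
  by (simp add: butterfly_mat_def chadamard_entry_sym)

lemma butterfly_mat_column_support:
  assumes "w < 2 ^ width n" "x < 2 ^ width n" "w \<noteq> unset_bit n x" "w \<noteq> set_bit n x"
  shows "butterfly_mat n $$ (w, x) = 0"
proof -
  have "\<not> agree_off {n} (carry_shift n w) (carry_shift n x)"
    using assms(3,4) agree_off_single_cases by (auto simp: agree_off_carry_shift_iff)
  then show ?thesis
    using assms(1,2) by (simp add: butterfly_mat_def chadamard_entry_def)
qed

lemma index_hadamard:
  "j < 2 \<Longrightarrow> hadamard $$ (0, j) = complex_of_real (1 / sqrt 2)"
  "hadamard $$ (1, 0) = complex_of_real (1 / sqrt 2)"
  "hadamard $$ (1, 1) = complex_of_real (- (1 / sqrt 2))"
  by (auto simp: hadamard_def)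

lemma butterfly_mat_unset_bit:
  assumes x: "x < 2 ^ Suc n"
  shows "butterfly_mat n $$ (unset_bit n x, x) = complex_of_real (bfly_coef0 (2 ^ n) x)"
proof -
  have "butterfly_mat n $$ (unset_bit n x, x) =
      chadamard_entry (Suc n) n (carry_shift n (unset_bit n x)) (carry_shift n x)"
    using less_exp_width[OF x] by (simp add: butterfly_mat_def unset_bit_less_exp)
  moreover have "agree_off {n} (carry_shift n (unset_bit n x)) (carry_shift n x)"
    by (simp add: agree_off_carry_shift_iff)
  moreover have "bitval (carry_shift n (unset_bit n x)) n = 0"
    by (simp add: bitval_def bit_carry_shift_data bit_unset_bit_iff)
  ultimately show ?thesis
    using bit_carry_shift_flag[OF x] less_half_iff_not_bit[OF x] index_hadamard(1)[of "bitval (carry_shift n x) n"]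
    by (cases "x mod 2 ^ n = 0") (auto simp: chadamard_entry_def bfly_coef0_def bitval_def bit_carry_shift_data)
qed

lemma butterfly_mat_set_bit:
  assumes x: "x < 2 ^ Suc n"
  shows "butterfly_mat n $$ (set_bit n x, x) = complex_of_real (bfly_coef1 (2 ^ n) x)"
proof -
  have "butterfly_mat n $$ (set_bit n x, x) =
      chadamard_entry (Suc n) n (carry_shift n (set_bit n x)) (carry_shift n x)"
    using less_exp_width[OF x] width_props(1) by (simp add: butterfly_mat_def set_bit_less_exp)
  moreover have "agree_off {n} (carry_shift n (set_bit n x)) (carry_shift n x)"
    by (simp add: agree_off_carry_shift_iff)
  moreover have "bitval (carry_shift n (set_bit n x)) n = 1"
    by (simp add: bitval_def bit_carry_shift_data bit_set_bit_iff)
  ultimately show ?thesis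
    using bit_carry_shift_flag[OF x] less_half_iff_not_bit[OF x] index_hadamard(2,3)
    by (cases "x mod 2 ^ n = 0") (auto simp: chadamard_entry_def bfly_coef1_def bitval_def bit_carry_shift_data)
qed


section \<open>Negating the low bits\<close>

text \<open>Complementing the low bits and then adding bit \<open>n\<close> to them negates them modulo \<open>2^n\<close>
  whenever bit \<open>n\<close> is set.\<close>

definition neg_low :: "nat \<Rightarrow> nat \<Rightarrow> nat" where
  "neg_low n y = reg_add [0..<n] (\<lambda>y. bitval y n) (cnot_fanout n [0..<n] y)"

definition neg_low_circ :: "nat \<Rightarrow> gate list" where
  "neg_low_circ n = add_bit_circ [0..<n] n @ map (CX n) [0..<n]"

lemma circuit_mat_neg_low: "circuit_mat (width n) (neg_low_circ n) = perm_op (width n) (neg_low n)"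
proof -
  let ?m = "width n"
  have "circuit_mat ?m (neg_low_circ n) =
      perm_op ?m (reg_add [0..<n] (\<lambda>y. bitval y n)) * perm_op ?m (cnot_fanout n [0..<n])"
    using width_props by (simp add: neg_low_circ_def circuit_mat_append circuit_mat_add_bit circuit_mat_cnot_fanout)
  also have "\<dots> = perm_op ?m (neg_low n)"
    using width_props by (simp add: perm_op_mult cnot_fanout_less_exp neg_low_def[abs_def])
  finally show ?thesis .
qed

lemma valid_neg_low_circ: "\<forall>g\<in>set (neg_low_circ n). valid_gate (width n) g"
proof -
  have "\<forall>g\<in>set (add_bit_circ [0..<n] n). valid_gate (width n) g"
    by (rule valid_add_bit_circ) (auto simp: width_def)
  then show ?thesis
    by (auto simp: neg_low_circ_def width_def)
qed

lemma length_neg_low_circ: "length (neg_low_circ n) \<le> 6 * n ^ 2 + 6 * n"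
  using length_add_bit_circ[of "[0..<n]" n] by (simp add: neg_low_circ_def)

lemma neg_low_props:
  "agree_off (set [0..<n]) (neg_low n y) y"
  "reg_val [0..<n] (neg_low n y) =
     (if bit y n then (2 ^ n - reg_val [0..<n] y) mod 2 ^ n else reg_val [0..<n] y)"
proof -
  let ?R = "[0..<n]" and ?c = "cnot_fanout n [0..<n] y"
  have bit_c: "bit ?c j = (if j \<in> set ?R \<and> bit y n then \<not> bit y j else bit y j)" for j
    by (rule bit_cnot_fanout) auto
  then have "agree_off (set ?R) ?c y"
    by (auto simp: agree_off_def)
  then show "agree_off (set ?R) (neg_low n y) y"
    unfolding neg_low_def reg_add_def using agree_off_set_reg agree_off_trans by blast
  have val: "reg_val ?R (neg_low n y) = (reg_val ?R ?c + bitval y n) mod 2 ^ n"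
    using bit_c[of n] by (simp add: neg_low_def reg_val_reg_add bitval_def)
  show "reg_val ?R (neg_low n y) = (if bit y n then (2 ^ n - reg_val ?R y) mod 2 ^ n else reg_val ?R y)"
  proof (cases "bit y n")
    case True
    then have "reg_val ?R ?c + reg_val ?R y = 2 ^ n - 1"
      using reg_val_complement[of ?R ?c y] bit_c by simp
    then have "reg_val ?R ?c + bitval y n = 2 ^ n - reg_val ?R y"
      using True reg_val_less[of ?R y] by (simp add: bitval_def)
    then show ?thesis
      using val True by simp
  next
    case False
    then have "?c = y"
      using bit_c by (intro bit_eqI) auto
    then show ?thesis
      using val False reg_val_less[of ?R y] by (simp add: bitval_def)
  qed
qed

lemma bit_neg_low_outside: "n \<le> j \<Longrightarrow> bit (neg_low n y) j = bit y j"
  using neg_low_props(1)[of n y] by (auto simp: agree_off_def)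

lemma neg_low_involution: "neg_low n (neg_low n y) = y"
proof (rule agree_off_reg_val_eqI[of "[0..<n]"])
  show "agree_off (set [0..<n]) (neg_low n (neg_low n y)) y"
    using neg_low_props(1) agree_off_trans by blast
  have "bit (neg_low n y) n = bit y n"
    by (simp add: bit_neg_low_outside)
  moreover have "reg_val [0..<n] y < 2 ^ n"
    using reg_val_less[of "[0..<n]" y] by simp
  ultimately show "reg_val [0..<n] (neg_low n (neg_low n y)) = reg_val [0..<n] y"
    using neg_low_props(2)[of n y] neg_low_props(2)[of n "neg_low n y"]
    by (cases "reg_val [0..<n] y = 0") simp_all
qed

lemma neg_low_eq_iff: "neg_low n a = b \<longleftrightarrow> a = neg_low n b"
  by (metis neg_low_involution)

lemma neg_low_less_exp: "y < 2 ^ m \<Longrightarrow> n < m \<Longrightarrow> neg_low n y < 2 ^ m"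
  unfolding neg_low_def by (rule reg_add_less_exp) (auto simp: cnot_fanout_less_exp)

lemma neg_low_low: "r < 2 ^ n \<Longrightarrow> neg_low n r = r"
proof (rule agree_off_reg_val_eqI[of "[0..<n]"])
  assume "r < 2 ^ n"
  then show "reg_val [0..<n] (neg_low n r) = reg_val [0..<n] r"
    using neg_low_props(2)[of n r] not_bit_if_less_exp[of r n n] by simp
qed (rule neg_low_props(1))

lemma neg_low_high:
  assumes r: "r < 2 ^ n"
  shows "neg_low n (2 ^ n + r) = 2 ^ n + (2 ^ n - r) mod 2 ^ n"
proof -
  let ?y = "2 ^ n + r" and ?z = "neg_low n (2 ^ n + r)"
  have y: "?y < 2 ^ Suc n" "bit ?y n"
    using r not_bit_if_less_exp[of r n n] by (simp_all add: bit_iff_odd)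
  have high: "bit ?z j = bit ?y j" if "n \<le> j" for j
    using that by (rule bit_neg_low_outside)
  then have "?z < 2 ^ Suc n"
    unfolding less_exp_iff_no_high_bits using not_bit_if_less_exp[OF y(1)] by (metis Suc_leD)
  then have "?z = ?z mod 2 ^ n + 2 ^ n * bitval ?z n"
    by (rule split_top_bit)
  moreover have "bitval ?z n = 1"
    using high[of n] y(2) by (simp add: bitval_def)
  moreover have "?z mod 2 ^ n = (2 ^ n - r) mod 2 ^ n"
    using neg_low_props(2)[of n ?y] y(2) r by (simp add: reg_val_upt)
  ultimately show ?thesis
    by simp
qed

lemma neg_low_unset_bit: "(x::nat) < 2 ^ Suc n \<Longrightarrow> neg_low n (unset_bit n x) = bfly_row0 (2 ^ n) x"
  unfolding bfly_row0_def by (simp only: unset_bit_eq_mod) (rule neg_low_low, simp)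

lemma neg_low_set_bit: "(x::nat) < 2 ^ Suc n \<Longrightarrow> neg_low n (set_bit n x) = bfly_row1 (2 ^ n) x"
  unfolding bfly_row1_def by (simp only: set_bit_eq_add_mod) (rule neg_low_high, simp)

lemma bfly_row_less:
  assumes "0 < N"
  shows "bfly_row0 N x < 2 * N" "bfly_row1 N x < 2 * N"
proof -
  have "x mod N < N" "(N - x mod N) mod N < N"
    using assms by simp_all
  then show "bfly_row0 N x < 2 * N" "bfly_row1 N x < 2 * N"
    unfolding bfly_row0_def bfly_row1_def by linarith+
qed


definition dct_dst_circ :: "nat \<Rightarrow> gate list" where
  "dct_dst_circ n = butterfly_circ n @ neg_low_circ n @ dft_circ [0..<Suc n] @ neg_low_circ n @ butterfly_circ n"

lemma circuit_mat_dct_dst: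
  "circuit_mat (width n) (dct_dst_circ n) =
    (butterfly_mat n * perm_op (width n) (neg_low n)) *
    (dft_mat (width n) [0..<Suc n] * (perm_op (width n) (neg_low n) * butterfly_mat n))"
proof -
  have "circuit_mat (width n) (dft_circ [0..<Suc n]) = dft_mat (width n) [0..<Suc n]"
    by (rule circuit_mat_dft) (auto simp: width_def)
  then show ?thesis
    by (simp add: dct_dst_circ_def circuit_mat_append circuit_mat_butterfly circuit_mat_neg_low
        assoc_mult_mat[of _ "2 ^ width n" "2 ^ width n" _ "2 ^ width n" _ "2 ^ width n"])
qed

lemma index_neg_low_mult_butterfly:
  "w < 2 ^ width n \<Longrightarrow> z < 2 ^ width n \<Longrightarrow>
   (perm_op (width n) (neg_low n) * butterfly_mat n) $$ (w, z) = butterfly_mat n $$ (neg_low n w, z)"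
  using width_props(1) by (intro index_perm_op_mult) (auto simp: neg_low_less_exp neg_low_eq_iff)

lemma index_butterfly_mult_neg_low:
  "w < 2 ^ width n \<Longrightarrow> z < 2 ^ width n \<Longrightarrow>
   (butterfly_mat n * perm_op (width n) (neg_low n)) $$ (z, w) = butterfly_mat n $$ (neg_low n w, z)"
  using width_props(1) by (simp add: index_mult_perm_op neg_low_less_exp butterfly_mat_sym)

lemma butterfly_mat_neg_low_support:
  assumes "w < 2 ^ width n" "z < 2 ^ width n" "w \<noteq> neg_low n (unset_bit n z)" "w \<noteq> neg_low n (set_bit n z)"
  shows "butterfly_mat n $$ (neg_low n w, z) = 0"
  using assms width_props(1)
  by (intro butterfly_mat_column_support) (auto simp: neg_low_less_exp neg_low_eq_iff)

lemma neg_low_unset_set_less: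
  "z < 2 ^ width n \<Longrightarrow> neg_low n (unset_bit n z) < 2 ^ width n"
  "z < 2 ^ width n \<Longrightarrow> neg_low n (set_bit n z) < 2 ^ width n"
  using width_props(1) by (simp_all add: unset_bit_less_exp set_bit_less_exp neg_low_less_exp)

lemma neg_low_unset_bit_neq: "neg_low n (unset_bit n z) \<noteq> neg_low n (set_bit n z)"
  by (metis neg_low_involution unset_bit_neq_set_bit)

text \<open>Since \<open>neg_low\<close> is an involution and \<open>butterfly_mat\<close> is symmetric, both outer factors are
  the butterfly \<open>B\<close>, up to transposition, and each of its columns has at most two nonzero entries.\<close>

lemma index_circuit_mat_dct_dst:
  assumes x: "x < 2 ^ width n" and y: "y < 2 ^ width n"
  defines "H \<equiv> butterfly_mat n" and "F \<equiv> dft_mat (width n) [0..<Suc n]"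
  shows "circuit_mat (width n) (dct_dst_circ n) $$ (y, x) =
    H $$ (unset_bit n y, y) * (F $$ (neg_low n (unset_bit n y), neg_low n (unset_bit n x)) * H $$ (unset_bit n x, x) +
                               F $$ (neg_low n (unset_bit n y), neg_low n (set_bit n x)) * H $$ (set_bit n x, x)) +
    H $$ (set_bit n y, y) * (F $$ (neg_low n (set_bit n y), neg_low n (unset_bit n x)) * H $$ (unset_bit n x, x) +
                             F $$ (neg_low n (set_bit n y), neg_low n (set_bit n x)) * H $$ (set_bit n x, x))"
proof -
  let ?d = "2 ^ width n :: nat" and ?P = "perm_op (width n) (neg_low n)"
  have carrier: "H \<in> carrier_mat ?d ?d" "F \<in> carrier_mat ?d ?d"
    by (simp_all add: H_def F_def)
  note entries = index_neg_low_mult_butterfly index_butterfly_mult_neg_low butterfly_mat_neg_low_support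
  have FV: "(F * (?P * H)) $$ (a, x) =
      F $$ (a, neg_low n (unset_bit n x)) * H $$ (unset_bit n x, x) +
      F $$ (a, neg_low n (set_bit n x)) * H $$ (set_bit n x, x)" if "a < ?d" for a
  proof -
    have "(F * (?P * H)) $$ (a, x) =
        F $$ (a, neg_low n (unset_bit n x)) * (?P * H) $$ (neg_low n (unset_bit n x), x) +
        F $$ (a, neg_low n (set_bit n x)) * (?P * H) $$ (neg_low n (set_bit n x), x)"
      using that x carrier neg_low_unset_set_less[OF x] neg_low_unset_bit_neq
      by (intro index_mult_two_supported_column[of _ ?d]) (auto simp: H_def entries)
    then show ?thesis
      using x neg_low_unset_set_less[OF x] by (simp add: H_def entries neg_low_involution)
  qed
  have "circuit_mat (width n) (dct_dst_circ n) $$ (y, x) = ((H * ?P) * (F * (?P * H))) $$ (y, x)"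
    unfolding H_def F_def circuit_mat_dct_dst ..
  also have "\<dots> = (H * ?P) $$ (y, neg_low n (unset_bit n y)) * (F * (?P * H)) $$ (neg_low n (unset_bit n y), x) +
      (H * ?P) $$ (y, neg_low n (set_bit n y)) * (F * (?P * H)) $$ (neg_low n (set_bit n y), x)"
    using x y carrier neg_low_unset_set_less[OF y] neg_low_unset_bit_neq
    by (intro index_mult_two_supported_row[of _ ?d]) (auto simp: H_def entries)
  finally show ?thesis
    using y neg_low_unset_set_less[OF y] by (simp add: FV[unfolded H_def] H_def entries neg_low_involution)
qed

lemma index_dft_data:
  assumes ab: "a < 2 ^ Suc n" "b < 2 ^ Suc n"
  shows "dft_mat (width n) [0..<Suc n] $$ (a, b) = dft_entry (2 ^ n) a b"
proof -
  have "agree_off (set [0..<Suc n]) a b"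
    unfolding agree_off_def using not_bit_if_less_exp[OF ab(1)] not_bit_if_less_exp[OF ab(2)] by auto
  moreover have "reg_val [0..<Suc n] a = a" "reg_val [0..<Suc n] b = b"
    using ab by (simp_all only: reg_val_upt mod_less)
  moreover have "2 * pi * real a * real b / 2 ^ Suc n = pi * real b * real a / real ((2::nat) ^ n)"
    by (simp add: field_simps)
  moreover have "(2::real) ^ Suc n = 2 * real ((2::nat) ^ n)"
    by simp
  ultimately show ?thesis
    using less_exp_width[OF ab(1)] less_exp_width[OF ab(2)]
    by (simp only: dft_mat_def index_mat(1) split length_upt dft_entry_def) (simp add: ac_simps)
qed

lemma index_dft_ancilla:
  assumes "a < 2 ^ width n" "b < 2 ^ width n" "bit a (Suc n)" "\<not> bit b (Suc n)"
  shows "dft_mat (width n) [0..<Suc n] $$ (a, b) = 0"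
proof -
  have "Suc n \<notin> set [0..<Suc n]"
    by simp
  then have "\<not> agree_off (set [0..<Suc n]) a b"
    using assms(3,4) unfolding agree_off_def by blast
  then show ?thesis
    using assms(1,2) by (simp add: dft_mat_def)
qed

lemma index_dct_dst_circ_data:
  assumes x: "x < 2 ^ Suc n" and y: "y < 2 ^ Suc n"
  shows "circuit_mat (width n) (dct_dst_circ n) $$ (y, x) = dct_dst_entry (2 ^ n) y x"
proof -
  have rows: "bfly_row0 (2 ^ n) z < 2 ^ Suc n" "bfly_row1 (2 ^ n) z < 2 ^ Suc n" for z
    using bfly_row_less[of "2 ^ n" z] by simp_all
  have "circuit_mat (width n) (dct_dst_circ n) $$ (y, x) = bfly_dft_bfly (2 ^ n) y x"
    unfolding bfly_dft_bfly_def
    by (simp only: index_circuit_mat_dct_dst[OF less_exp_width[OF x] less_exp_width[OF y]]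
        butterfly_mat_unset_bit[OF x] butterfly_mat_set_bit[OF x] butterfly_mat_unset_bit[OF y]
        butterfly_mat_set_bit[OF y] neg_low_unset_bit[OF x] neg_low_set_bit[OF x] neg_low_unset_bit[OF y]
        neg_low_set_bit[OF y] index_dft_data[OF rows(1) rows(1)] index_dft_data[OF rows(1) rows(2)]
        index_dft_data[OF rows(2) rows(1)] index_dft_data[OF rows(2) rows(2)])
  also have "\<dots> = dct_dst_entry (2 ^ n) y x"
    using x y by (intro bfly_dft_bfly_eq_dct_dst) simp_all
  finally show ?thesis .
qed

lemma index_dct_dst_circ_ancilla:
  assumes x: "x < 2 ^ Suc n" and y: "y < 2 ^ width n" "\<not> y < 2 ^ Suc n"
  shows "circuit_mat (width n) (dct_dst_circ n) $$ (y, x) = 0"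
proof -
  have "bit (neg_low n (unset_bit n y)) (Suc n)" "bit (neg_low n (set_bit n y)) (Suc n)"
    using bit_ancilla_if_not_less[OF y]
    by (simp_all add: bit_neg_low_outside bit_unset_bit_iff bit_set_bit_iff)
  moreover have "\<not> bit (neg_low n (unset_bit n x)) (Suc n)" "\<not> bit (neg_low n (set_bit n x)) (Suc n)"
    using bfly_row_less[of "2 ^ n" x] not_bit_if_less_exp[of _ "Suc n" "Suc n"]
    by (simp_all add: neg_low_unset_bit[OF x] neg_low_set_bit[OF x])
  moreover have "neg_low n (unset_bit n z) < 2 ^ width n" "neg_low n (set_bit n z) < 2 ^ width n"
    if "z < 2 ^ width n" for z
    using that width_props(1) by (simp_all add: unset_bit_less_exp set_bit_less_exp neg_low_less_exp)
  ultimately have "dft_mat (width n) [0..<Suc n] $$ (a, b) = 0"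
    if "a \<in> {neg_low n (unset_bit n y), neg_low n (set_bit n y)}"
      "b \<in> {neg_low n (unset_bit n x), neg_low n (set_bit n x)}" for a b
    using that less_exp_width[OF x] y(1) by (auto simp del: upt_Suc intro!: index_dft_ancilla)
  then show ?thesis
    by (simp add: index_circuit_mat_dct_dst[OF less_exp_width[OF x] y(1)] del: upt_Suc)
qed

lemma index_dct_dst:
  assumes N: "1 \<le> N" and yx: "y < 2 * N" "x < 2 * N"
  shows "direct_sum (DCT1 N) (smult_mat \<i> (DST1 N)) $$ (y, x) = dct_dst_entry N y x"
proof -
  have dims: "dim_row (DCT1 N) = N + 1" "dim_col (DCT1 N) = N + 1"
    "dim_row (smult_mat \<i> (DST1 N)) = N - 1" "dim_col (smult_mat \<i> (DST1 N)) = N - 1"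
    by (simp_all add: DCT1_def DST1_def)
  show ?thesis
  proof (cases "y \<le> N \<or> x \<le> N")
    case True
    then show ?thesis
      using N yx dims by (auto simp: direct_sum_def dct_dst_entry_def DCT1_def)
  next
    case False
    then have "y - (N + 1) + 1 = y - N" "x - (N + 1) + 1 = x - N"
      "y - (N + 1) < N - 1" "x - (N + 1) < N - 1"
      using yx by auto
    then show ?thesis
      using N yx dims False by (simp add: direct_sum_def dct_dst_entry_def DST1_def of_nat_diff)
  qed
qed

lemma valid_dct_dst_circ: "\<forall>g\<in>set (dct_dst_circ n). valid_gate (width n) g"
proof -
  have "\<forall>g\<in>set (dft_circ [0..<Suc n]). valid_gate (width n) g"
    by (rule valid_dft_circ) (auto simp: width_def)
  then show ?thesis
    using valid_butterfly_circ valid_neg_low_circ by (auto simp: dct_dst_circ_def)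
qed

lemma length_dct_dst_circ:
  assumes "1 \<le> n"
  shows "length (dct_dst_circ n) \<le> 256 * n ^ 2"
proof -
  let ?m = "n + 1"
  have "length (dct_dst_circ n) \<le>
      2 * (12 * ?m ^ 2 + 2 * ?m + 3) + 2 * (6 * n ^ 2 + 6 * n) + (3 * ?m ^ 2 + 3 * ?m)"
    using length_butterfly_circ[of n] length_neg_low_circ[of n] length_dft_circ[of "[0..<Suc n]"]
    by (simp add: dct_dst_circ_def)
  also have "\<dots> \<le> 64 * ?m ^ 2"
    using assms by (simp add: power2_eq_square algebra_simps)
  also have "\<dots> \<le> 64 * (2 * n) ^ 2"
    using assms by (intro mult_le_mono2 power_mono) simp_all
  finally show ?thesis
    by (simp add: power_mult_distrib)
qed

lemma dct_dst_circ_realizes: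
  "realizes_with_ancillas (n + 1) 1 (map (gate_mat (width n)) (dct_dst_circ n))
    (direct_sum (DCT1 (2 ^ n)) (smult_mat \<i> (DST1 (2 ^ n))))"
  unfolding realizes_with_ancillas_def
proof (intro conjI allI impI ballI)
  show "elementary_gate (n + 1 + 1) g" if "g \<in> set (map (gate_mat (width n)) (dct_dst_circ n))" for g
    using that valid_dct_dst_circ elementary_gate_mat by (auto simp: width_def)
  fix x y :: nat
  assume "x < 2 ^ (n + 1)" "y < 2 ^ (n + 1 + 1)"
  then show "circuit_product (2 ^ (n + 1 + 1)) (map (gate_mat (width n)) (dct_dst_circ n)) $$ (y, x) =
      (if y < 2 ^ (n + 1) then direct_sum (DCT1 (2 ^ n)) (smult_mat \<i> (DST1 (2 ^ n))) $$ (y, x) else 0)"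
    using index_dct_dst_circ_data[of x n y] index_dct_dst_circ_ancilla[of x n y] index_dct_dst[of "2 ^ n" y x]
    by (simp add: circuit_mat_def width_def)
qed

theorem mainTheorem1:
  shows "\<exists>(c::real) > 0. \<exists>A::nat. \<forall>n::nat. n \<ge> 1 \<longrightarrow>
     (\<exists>a \<le> A. \<exists>gs. realizes_with_ancillas (n + 1) a gs
          (direct_sum (DCT1 (2 ^ n)) (smult_mat \<i> (DST1 (2 ^ n))))
        \<and> real (length gs) \<le> c * real n ^ 2)"
proof -
  have circuit: "\<exists>gs. realizes_with_ancillas (n + 1) 1 gs (direct_sum (DCT1 (2 ^ n)) (smult_mat \<i> (DST1 (2 ^ n))))
      \<and> real (length gs) \<le> 256 * real n ^ 2" if n: "1 \<le> n" for n
  proof (intro exI conjI)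
    show "realizes_with_ancillas (n + 1) 1 (map (gate_mat (width n)) (dct_dst_circ n))
        (direct_sum (DCT1 (2 ^ n)) (smult_mat \<i> (DST1 (2 ^ n))))"
      by (rule dct_dst_circ_realizes)
    have "real (length (dct_dst_circ n)) \<le> real (256 * n ^ 2)"
      using length_dct_dst_circ[OF n] by (simp only: of_nat_le_iff)
    then show "real (length (map (gate_mat (width n)) (dct_dst_circ n))) \<le> 256 * real n ^ 2"
      by simp
  qed
  show ?thesis
    by (intro exI[of _ 256] conjI exI[of _ 1] allI impI) (use circuit in auto)
qed

end
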